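(* Let $F$ and $G$ be $\varphi$-functions and $0<p,q<\infty$. (i) If $G\circ T^{1/p}$ is equivalent to a convex function and $\tilde G\circ\tilde F^{-1}$ is concave, then $L_{F,G}$ is $p$-convex. (ii) If $G\circ T^{1/q}$ is equivalent to a concave function and $\tilde G\circ\tilde F^{-1}$ is convex, then $L_{F,G}$ is $q$-concave.
   Context: A $\varphi$-function is a continuous, strictly increasing function $F:[0,\infty)\to[0,\infty)$ with $F(0)=0$ and $\lim_{t\to\infty}F(t)=\infty$. $T^p$ denotes the function $t\mapsto t^p$. Two $\varphi$-functions $F,G$ are equivalent if for some $c<\infty$, $F(t/c)\le G(t)\le F(ct)$ for all $t\ge0$. For a $\varphi$-function $F$ put $\tilde F(t)=1/F(1/t)$ for $t>0$ and $\tilde F(0)=0$. Functions live on $[0,\infty)$ with Lebesgue measure $\lambda$; $f^*(x)=\sup\{t:\lambda(|f|\ge t)\ge x\}$. Luxemburg functional: $\|f\|_G=\inf\{c>0:\int_0^\infty G(|f(x)|/c)\,dx\le1\}$. Orlicz--Lorentz functional: $\|f\|_{F,G}=\|f^*\circ\tilde F\circ\tilde G^{-1}\|_G$, space $L_{F,G}=\{f:\|f\|_{F,G}<\infty\}$. A space $X$ with functional $\|\cdot\|_X$ is $p$-convex if there is $C<\infty$ with $\|(\sum_{i=1}^n|f_i|^p)^{1/p}\|_X\le C(\sum_{i=1}^n\|f_i\|_X^p)^{1/p}$ for all $n$ and $f_1,\dots,f_n\in X$; it is $q$-concave if there is $C<\infty$ with $\|(\sum_{i=1}^n|f_i|^q)^{1/q}\|_X\ge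 C^{-1}(\sum_{i=1}^n\|f_i\|_X^q)^{1/q}$ for all $n$ and $f_1,\dots,f_n\in X$. *)

theory Defs
  imports "HOL-Analysis.Analysis"
begin

text \<open>phi-functions on [0,infinity) (values outside [0,infinity) are irrelevant).\<close>
definition phi_function :: "(real \<Rightarrow> real) \<Rightarrow> bool" where
  "phi_function F \<longleftrightarrow> continuous_on {0..} F \<and> strict_mono_on {0..} F \<and> F 0 = 0
     \<and> filterlim F at_top at_top"

definition phi_equiv :: "(real \<Rightarrow> real) \<Rightarrow> (real \<Rightarrow> real) \<Rightarrow> bool" where
  "phi_equiv F G \<longleftrightarrow> (\<exists>c>0. \<forall>t\<ge>0. F (t / c) \<le> G t \<and> G t \<le> F (c * t))"

definition phi_tilde :: "(real \<Rightarrow> real) \<Rightarrow> real \<Rightarrow> real" where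
  "phi_tilde F = (\<lambda>t. if t = 0 then 0 else 1 / F (1 / t))"

definition phi_inv :: "(real \<Rightarrow> real) \<Rightarrow> real \<Rightarrow> real" where
  "phi_inv F = inv_into {0..} F"

definition decr_rearr :: "(real \<Rightarrow> real) \<Rightarrow> real \<Rightarrow> ennreal" where
  "decr_rearr f x = Sup (ennreal ` {t. 0 \<le> t \<and>
      ennreal x \<le> emeasure lebesgue {y. 0 \<le> y \<and> t \<le> \<bar>f y\<bar>}})"

definition ext_phi :: "(real \<Rightarrow> real) \<Rightarrow> ennreal \<Rightarrow> ennreal" where
  "ext_phi G u = (if u = \<infinity> then \<infinity> else ennreal (G (enn2real u)))"

text \<open>Luxemburg functional of a nonnegative function on [0,infinity) (inf of empty set = infinity).\<close>
definition luxemburg :: "(real \<Rightarrow> real) \<Rightarrow> (real \<Rightarrow> ennreal) \<Rightarrow> ennreal" where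
  "luxemburg G h = Inf (ennreal ` {c. 0 < c \<and>
      (\<integral>\<^sup>+ x \<in> {0..}. ext_phi G (h x / ennreal c) \<partial>lebesgue) \<le> 1})"

definition OL_norm :: "(real \<Rightarrow> real) \<Rightarrow> (real \<Rightarrow> real) \<Rightarrow> (real \<Rightarrow> real) \<Rightarrow> ennreal" where
  "OL_norm F G f = luxemburg G (\<lambda>x. decr_rearr f (phi_tilde F (phi_inv (phi_tilde G) x)))"

definition OL_space :: "(real \<Rightarrow> real) \<Rightarrow> (real \<Rightarrow> real) \<Rightarrow> (real \<Rightarrow> real) set" where
  "OL_space F G = {f. f \<in> borel_measurable (lebesgue_on {0..}) \<and> OL_norm F G f < \<infinity>}"

definition p_convex :: "(real \<Rightarrow> real) set \<Rightarrow> ((real \<Rightarrow> real) \<Rightarrow> ennreal) \<Rightarrow> real \<Rightarrow> bool" where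
  "p_convex X N p \<longleftrightarrow> (\<exists>C>0. \<forall>(n::nat) (f::nat \<Rightarrow> real \<Rightarrow> real). (\<forall>i<n. f i \<in> X) \<longrightarrow>
      N (\<lambda>x. (\<Sum>i<n. \<bar>f i x\<bar> powr p) powr (1 / p))
        \<le> ennreal (C * (\<Sum>i<n. enn2real (N (f i)) powr p) powr (1 / p)))"

definition q_concave :: "(real \<Rightarrow> real) set \<Rightarrow> ((real \<Rightarrow> real) \<Rightarrow> ennreal) \<Rightarrow> real \<Rightarrow> bool" where
  "q_concave X N q \<longleftrightarrow> (\<exists>C>0. \<forall>(n::nat) (f::nat \<Rightarrow> real \<Rightarrow> real). (\<forall>i<n. f i \<in> X) \<longrightarrow>
      ennreal ((1 / C) * (\<Sum>i<n. enn2real (N (f i)) powr q) powr (1 / q))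
        \<le> N (\<lambda>x. (\<Sum>i<n. \<bar>f i x\<bar> powr q) powr (1 / q)))"

end

theory Submission
  imports Defs
begin

(* Write W = F~ o G~^-1 and psi = W^-1 = G~ o F~^-1.  For every level, the set of x with
   G (f*(W x) / c) above it is an initial interval whose length is psi applied to the measure
   of the corresponding level set of |f|.  By the layer cake formula, the Luxemburg integrand of
   the Orlicz-Lorentz norm at c is therefore Phi (G (|f| / c)), where Phi u is the integral over
   t >= 0 of psi (lambda {u > t}).  This modular Phi is monotone and positively homogeneous; it is
   subadditive if psi is concave and superadditive if psi is convex.  For the truncations
   psi = min (., r) and psi = (. - r)+ this holds because Phi u is the minimum over s of
   r s + integral (u - s)+, respectively the supremum over s of integral min (u, s) - r s, and the
   integrands behave well under splitting s = s1 + s2; a concave (convex) psi is approximated from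
   below by positive combinations of these truncations.  Finally, for the Luxemburg functional of
   such a modular, Jensen's inequality for the convex (concave) H equivalent to G o T^(1/p)
   (G o T^(1/q)) gives p-convexity (q-concavity). *)

section \<open>Increasing bijections of the half-line\<close>

definition phi_bij :: "(real \<Rightarrow> real) \<Rightarrow> bool" where
  "phi_bij f \<longleftrightarrow> strict_mono_on {0..} f \<and> f 0 = 0 \<and> (\<forall>y\<ge>0. \<exists>x\<ge>0. f x = y)"

lemma phi_bij_less_iff: "phi_bij f \<Longrightarrow> 0 \<le> x \<Longrightarrow> 0 \<le> y \<Longrightarrow> f x < f y \<longleftrightarrow> x < y"
  unfolding phi_bij_def by (metis atLeast_iff linorder_neq_iff order_less_imp_not_less strict_mono_onD)

lemma phi_bij_le_iff: "phi_bij f \<Longrightarrow> 0 \<le> x \<Longrightarrow> 0 \<le> y \<Longrightarrow> f x \<le> f y \<longleftrightarrow> x \<le> y"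
  using phi_bij_less_iff[of f y x] by (auto simp: not_less[symmetric])

lemma phi_bij_nonneg: "phi_bij f \<Longrightarrow> 0 \<le> x \<Longrightarrow> 0 \<le> f x"
  using phi_bij_le_iff[of f 0 x] by (simp add: phi_bij_def)

lemma phi_bij_pos: "phi_bij f \<Longrightarrow> 0 < x \<Longrightarrow> 0 < f x"
  using phi_bij_less_iff[of f 0 x] by (simp add: phi_bij_def)

lemma phi_bij_mono_on: "phi_bij f \<Longrightarrow> mono_on {0..} f"
  by (intro mono_onI) (simp add: phi_bij_le_iff)

lemma phi_bij_inv_into:
  assumes "phi_bij f" "0 \<le> y"
  shows "0 \<le> inv_into {0..} f y" "f (inv_into {0..} f y) = y"
proof -
  have "y \<in> f ` {0..}" using assms unfolding phi_bij_def by force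
  then show "0 \<le> inv_into {0..} f y" "f (inv_into {0..} f y) = y"
    using inv_into_into[of y f "{0..}"] f_inv_into_f[of y f "{0..}"] by auto
qed

lemma phi_bij_inv_into_f: "phi_bij f \<Longrightarrow> 0 \<le> x \<Longrightarrow> inv_into {0..} f (f x) = x"
  by (simp add: phi_bij_def inv_into_f_f strict_mono_on_imp_inj_on)

lemma phi_bij_inv: "phi_bij f \<Longrightarrow> phi_bij (inv_into {0..} f)"
  unfolding phi_bij_def [of "inv_into {0..} f"]
proof (intro conjI allI impI strict_mono_onI)
  assume f: "phi_bij f"
  show "inv_into {0..} f a < inv_into {0..} f b" if "a \<in> {0..}" "b \<in> {0..}" "a < b" for a b
    using that phi_bij_less_iff[OF f] phi_bij_inv_into[OF f] by (metis atLeast_iff)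
  show "inv_into {0..} f 0 = 0"
    using phi_bij_inv_into_f[OF f, of 0] f by (simp add: phi_bij_def)
  show "\<exists>x\<ge>0. inv_into {0..} f x = y" if "0 \<le> y" for y
    using that f by (intro exI[of _ "f y"]) (simp add: phi_bij_inv_into_f phi_bij_nonneg)
qed

lemma phi_bij_comp: "phi_bij f \<Longrightarrow> phi_bij g \<Longrightarrow> phi_bij (f \<circ> g)"
  unfolding phi_bij_def [of "f \<circ> g"]
proof (intro conjI allI impI strict_mono_onI)
  assume f: "phi_bij f" and g: "phi_bij g"
  show "(f \<circ> g) a < (f \<circ> g) b" if "a \<in> {0..}" "b \<in> {0..}" "a < b" for a b
    using that by (simp add: phi_bij_less_iff[OF f] phi_bij_less_iff[OF g] phi_bij_nonneg[OF g])
  show "(f \<circ> g) 0 = 0" using f g by (simp add: phi_bij_def)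
  show "\<exists>x\<ge>0. (f \<circ> g) x = y" if "0 \<le> y" for y
    using that phi_bij_inv_into[OF f] phi_bij_inv_into[OF g]
    by (intro exI[of _ "inv_into {0..} g (inv_into {0..} f y)"]) simp
qed

lemma phi_function_imp_phi_bij:
  assumes F: "phi_function F"
  shows "phi_bij F"
  unfolding phi_bij_def
proof (intro conjI allI impI)
  show "strict_mono_on {0..} F" "F 0 = 0" using F by (auto simp: phi_function_def)
  fix y :: real assume y: "0 \<le> y"
  have "eventually (\<lambda>x. y \<le> F x) at_top" using F unfolding phi_function_def filterlim_at_top by auto
  then obtain T where T: "\<And>x. T \<le> x \<Longrightarrow> y \<le> F x" unfolding eventually_at_top_linorder by blast
  have "\<exists>x\<ge>0. x \<le> max T 0 \<and> F x = y"
  proof (rule IVT')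
    show "continuous_on {0..max T 0} F"
      using F unfolding phi_function_def by (auto intro: continuous_on_subset)
  qed (use T y \<open>F 0 = 0\<close> in auto)
  then show "\<exists>x\<ge>0. F x = y" by blast
qed

lemma phi_bij_phi_tilde:
  assumes F: "phi_bij F"
  shows "phi_bij (phi_tilde F)"
  unfolding phi_bij_def
proof (intro conjI allI impI strict_mono_onI)
  show "phi_tilde F 0 = 0" by (simp add: phi_tilde_def)
  show "phi_tilde F a < phi_tilde F b" if "a \<in> {0..}" "b \<in> {0..}" "a < b" for a b
  proof (cases "a = 0")
    case True
    then show ?thesis using that phi_bij_pos[OF F, of "1/b"] by (simp add: phi_tilde_def)
  next
    case False
    then have "0 < a" using that by simp
    then have "F (1/b) < F (1/a)" "0 < F (1/b)"
      using that phi_bij_less_iff[OF F, of "1/b" "1/a"] phi_bij_pos[OF F, of "1/b"]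
      by (auto simp: frac_less2)
    then show ?thesis using \<open>0 < a\<close> that by (simp add: phi_tilde_def frac_less2)
  qed
  show "\<exists>x\<ge>0. phi_tilde F x = y" if "0 \<le> y" for y
  proof (cases "y = 0")
    case True then show ?thesis by (intro exI[of _ 0]) (simp add: phi_tilde_def)
  next
    case False
    then have "0 < y" using that by simp
    obtain z where z: "z \<ge> 0" "F z = 1 / y"
      using F \<open>0 < y\<close> unfolding phi_bij_def by (meson less_eq_real_def zero_le_divide_1_iff)
    then have "0 < z" using \<open>0 < y\<close> F by (cases "z = 0") (auto simp: phi_bij_def)
    then show ?thesis using z \<open>0 < y\<close> by (intro exI[of _ "1/z"]) (simp add: phi_tilde_def)
  qed
qed

lemma phi_bij_isCont:
  assumes f: "phi_bij f" and x: "0 < x"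
  shows "isCont f x"
proof -
  have "f ` {0<..} = {0<..}"
  proof (intro equalityI subsetI)
    fix y :: real assume y: "y \<in> {0<..}"
    let ?z = "inv_into {0..} f y"
    have "0 \<le> ?z" "f ?z = y" using phi_bij_inv_into[OF f, of y] y by auto
    moreover have "?z \<noteq> 0" using \<open>f ?z = y\<close> y f by (auto simp: phi_bij_def)
    ultimately show "y \<in> f ` {0<..}" by (intro image_eqI[of y f ?z]) auto
  qed (auto simp: phi_bij_pos[OF f])
  then have "continuous_on {0<..} f"
    by (intro continuous_onI_mono) (auto simp: phi_bij_le_iff[OF f])
  then show ?thesis using x by (simp add: continuous_on_eq_continuous_at)
qed

lemma borel_measurable_phi_bij_comp:
  assumes H: "phi_bij H" and e: "e \<in> borel_measurable M" and e0: "\<And>y. 0 \<le> e y"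
  shows "(\<lambda>y. ennreal (H (e y))) \<in> borel_measurable M"
proof -
  have "mono (\<lambda>t. H (max t 0))" by (intro monoI) (auto simp: phi_bij_le_iff[OF H])
  then have "(\<lambda>y. ennreal (H (max (e y) 0))) \<in> borel_measurable M"
    using e borel_measurable_mono by measurable
  moreover have "max (e y) 0 = e y" for y using e0[of y] by simp
  ultimately show ?thesis by simp
qed

lemma mono_ext_phi: "mono_on {0..} G \<Longrightarrow> mono (ext_phi G)"
  unfolding mono_def ext_phi_def
  by (auto simp: top_unique less_top[symmetric] intro!: ennreal_leI mono_onD[of "{0..}" G] enn2real_mono)

section \<open>Distribution functions on the half-line\<close>

definition halfline :: "real measure" where
  "halfline = lebesgue_on {0..}"

lemma space_halfline: "space halfline = {0..}"
  by (simp add: halfline_def)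

lemma sigma_finite_lebesgue: "sigma_finite_measure (lebesgue :: real measure)"
proof
  have "x \<in> (\<Union>n::nat. {-real n..real n})" for x :: real
  proof -
    obtain n :: nat where "\<bar>x\<bar> \<le> real n" using real_arch_simple by blast
    then show ?thesis by (intro UN_I[of n]) auto
  qed
  then show "\<exists>A::real set set. countable A \<and> A \<subseteq> sets lebesgue \<and> \<Union>A = space lebesgue
      \<and> (\<forall>a\<in>A. emeasure lebesgue a \<noteq> \<infinity>)"
    by (intro exI[of _ "range (\<lambda>n::nat. {-real n..real n})"]) auto
qed

interpretation halfline: sigma_finite_measure halfline
  unfolding halfline_def by (rule sigma_finite_measure_restrict_space[OF sigma_finite_lebesgue]) auto

interpretation halfline_lborel: pair_sigma_finite halfline lborel ..

lemma emeasure_halfline: "A \<subseteq> {0..} \<Longrightarrow> emeasure halfline A = emeasure lebesgue A"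
  unfolding halfline_def by (rule emeasure_restrict_space) auto

lemma sets_halfline_borel: "A \<subseteq> {0..} \<Longrightarrow> A \<in> sets borel \<Longrightarrow> A \<in> sets halfline"
  unfolding halfline_def by (subst sets_restrict_space_iff) auto

lemma borel_measurable_halfline: "f \<in> borel_measurable borel \<Longrightarrow> f \<in> borel_measurable halfline"
  unfolding halfline_def by (intro measurable_restrict_space1 measurable_completion) simp

lemma emeasure_lborel_Ici: "emeasure lborel {0::real..} = \<infinity>"
proof -
  have "of_nat n \<le> emeasure lborel {0::real..}" for n
    using emeasure_mono[of "{0..real n}" "{0::real..}" lborel] by (auto simp: ennreal_of_nat_eq_real_of_nat)
  then have "(SUP n. of_nat n) \<le> emeasure lborel {0::real..}"
    by (rule SUP_least)
  then show ?thesis by (simp add: ennreal_SUP_of_nat_eq_top top_unique)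
qed

lemma borel_measurable_antimono:
  fixes g :: "real \<Rightarrow> 'a::{linorder_topology, second_countable_topology}"
  assumes "antimono g"
  shows "g \<in> borel_measurable borel"
proof (rule borel_measurableI_greater)
  fix y
  have "is_interval {x. y < g x}"
    using assms by (auto simp: is_interval_1 antimono_def intro: less_le_trans)
  then show "{x \<in> space borel. y < g x} \<in> sets borel"
    by (simp add: real_interval_borel_measurable)
qed

definition distr_fun :: "(real \<Rightarrow> ennreal) \<Rightarrow> real \<Rightarrow> ennreal" where
  "distr_fun u t = emeasure halfline {y \<in> space halfline. ennreal t < u y}"

lemma antimono_distr_fun:
  assumes [measurable]: "u \<in> borel_measurable halfline"
  shows "antimono (distr_fun u)"
  unfolding antimono_def distr_fun_def
  by (auto intro!: emeasure_mono simp: ennreal_leI dest: le_less_trans[OF ennreal_leI])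

lemma borel_measurable_distr_fun [measurable]:
  "u \<in> borel_measurable halfline \<Longrightarrow> distr_fun u \<in> borel_measurable borel"
  by (rule borel_measurable_antimono[OF antimono_distr_fun])

lemma distr_fun_mono:
  assumes [measurable]: "v \<in> borel_measurable halfline" and le: "\<And>y. 0 \<le> y \<Longrightarrow> u y \<le> v y"
  shows "distr_fun u t \<le> distr_fun v t"
proof -
  have "{y \<in> space halfline. ennreal t < u y} \<subseteq> {y \<in> space halfline. ennreal t < v y}"
    using le by (auto simp: space_halfline intro: less_le_trans)
  then show ?thesis unfolding distr_fun_def by (rule emeasure_mono) measurable
qed

lemma distr_fun_cmult:
  assumes "0 < c"
  shows "distr_fun (\<lambda>y. ennreal c * u y) t = distr_fun u (t / c)"
proof -
  have "ennreal t < ennreal c * a \<longleftrightarrow> ennreal (t / c) < a" for a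
  proof (cases a)
    case (real r)
    then show ?thesis using assms
      by (cases "0 \<le> t")
         (auto simp: ennreal_mult[symmetric] ennreal_less_iff field_simps ennreal_neg simp del: ennreal_mult)
  qed (use assms in \<open>simp add: ennreal_mult_top\<close>)
  then show ?thesis by (simp add: distr_fun_def)
qed

lemma emeasure_lborel_ennreal_below: "emeasure lborel {t::real. 0 \<le> t \<and> ennreal t < a} = a"
proof (cases a)
  case (real r)
  then have "{t::real. 0 \<le> t \<and> ennreal t < a} = {0..<r}"
    by (auto simp: ennreal_less_iff)
  then show ?thesis using real by simp
next
  case top
  then have "{t::real. 0 \<le> t \<and> ennreal t < a} = {0..}" by auto
  then show ?thesis using top emeasure_lborel_Ici by simp
qed

text \<open>The layer cake formula, by Tonelli's theorem for the region under the graph of \<open>u\<close>.\<close>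

lemma nn_integral_halfline_distr_fun:
  assumes [measurable]: "u \<in> borel_measurable halfline"
  shows "(\<integral>\<^sup>+y. u y \<partial>halfline) = (\<integral>\<^sup>+t. distr_fun u t * indicator {0..} t \<partial>lborel)"
proof -
  let ?f = "\<lambda>(y, t). indicator {p. 0 \<le> snd p \<and> ennreal (snd p) < u (fst p)} (y, t) :: ennreal"
  have [measurable]: "?f \<in> borel_measurable (halfline \<Otimes>\<^sub>M lborel)"
    by measurable
  have "(\<integral>\<^sup>+y. u y \<partial>halfline) = (\<integral>\<^sup>+y. (\<integral>\<^sup>+t. ?f (y, t) \<partial>lborel) \<partial>halfline)"
  proof (rule nn_integral_cong)
    fix y
    have "(\<integral>\<^sup>+t. ?f (y, t) \<partial>lborel) = (\<integral>\<^sup>+t. indicator {t. 0 \<le> t \<and> ennreal t < u y} t \<partial>lborel)"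
      by (intro nn_integral_cong) (auto simp: indicator_def)
    then show "u y = (\<integral>\<^sup>+t. ?f (y, t) \<partial>lborel)"
      by (simp add: emeasure_lborel_ennreal_below)
  qed
  also have "\<dots> = (\<integral>\<^sup>+t. (\<integral>\<^sup>+y. ?f (y, t) \<partial>halfline) \<partial>lborel)"
    using halfline_lborel.Fubini'[of "\<lambda>y t. ?f (y, t)"] by simp
  also have "\<dots> = (\<integral>\<^sup>+t. distr_fun u t * indicator {0..} t \<partial>lborel)"
  proof (rule nn_integral_cong)
    fix t :: real
    have "(\<integral>\<^sup>+y. ?f (y, t) \<partial>halfline)
        = (\<integral>\<^sup>+y. indicator {y \<in> space halfline. ennreal t < u y} y * indicator {0..} t \<partial>halfline)"
      by (intro nn_integral_cong) (auto simp: indicator_def)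
    then show "(\<integral>\<^sup>+y. ?f (y, t) \<partial>halfline) = distr_fun u t * indicator {0..} t"
      by (simp add: nn_integral_multc distr_fun_def)
  qed
  finally show ?thesis .
qed

lemma nn_integral_distr_fun_Ico:
  assumes [measurable]: "u \<in> borel_measurable halfline" and s: "0 \<le> s"
  shows "(\<integral>\<^sup>+t. distr_fun u t * indicator {0..<s} t \<partial>lborel) = (\<integral>\<^sup>+y. min (u y) (ennreal s) \<partial>halfline)"
proof -
  have "distr_fun (\<lambda>y. min (u y) (ennreal s)) t * indicator {0..} t = distr_fun u t * indicator {0..<s} t"
    for t :: real
  proof (cases "0 \<le> t \<and> t < s")
    case True
    then have "{y \<in> space halfline. ennreal t < min (u y) (ennreal s)} = {y \<in> space halfline. ennreal t < u y}"
      by (auto simp: ennreal_less_iff)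
    then show ?thesis using True by (simp add: distr_fun_def)
  next
    case False
    then consider "t < 0" | "s \<le> t" by linarith
    then show ?thesis
    proof cases
      case 2
      then have empty: "{y \<in> space halfline. ennreal t < min (u y) (ennreal s)} = {}"
        using s by (auto simp: ennreal_less_iff)
      have "distr_fun (\<lambda>y. min (u y) (ennreal s)) t = 0"
        unfolding distr_fun_def by (subst empty) simp
      then show ?thesis using 2 by simp
    qed simp
  qed
  then show ?thesis by (simp add: nn_integral_halfline_distr_fun)
qed

lemma nn_integral_distr_fun_Ici:
  assumes [measurable]: "u \<in> borel_measurable halfline" and s: "0 \<le> s"
  shows "(\<integral>\<^sup>+t. distr_fun u t * indicator {s..} t \<partial>lborel) = (\<integral>\<^sup>+y. u y - ennreal s \<partial>halfline)"
proof -
  have shift: "distr_fun (\<lambda>y. u y - ennreal s) t = distr_fun u (s + t)" if "0 \<le> t" for t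
  proof -
    have "ennreal t < a - ennreal s \<longleftrightarrow> ennreal (s + t) < a" for a
      using that s
      by (cases a) (auto simp: ennreal_minus ennreal_less_iff ennreal_plus[symmetric] simp del: ennreal_plus)
    then show ?thesis by (simp add: distr_fun_def)
  qed
  have "(\<integral>\<^sup>+t. distr_fun u t * indicator {s..} t \<partial>lborel)
      = (\<integral>\<^sup>+t. distr_fun u (s + 1 * t) * indicator {s..} (s + 1 * t) \<partial>lborel)"
    using nn_integral_real_affine[of "\<lambda>t. distr_fun u t * indicator {s..} t" 1 s] by simp
  also have "\<dots> = (\<integral>\<^sup>+t. distr_fun (\<lambda>y. u y - ennreal s) t * indicator {0..} t \<partial>lborel)"
    by (intro nn_integral_cong) (auto simp: indicator_def shift)
  also have "\<dots> = (\<integral>\<^sup>+y. u y - ennreal s \<partial>halfline)"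
    by (simp add: nn_integral_halfline_distr_fun)
  finally show ?thesis .
qed

section \<open>Modulars of distribution functions\<close>

definition dist_modular :: "(ennreal \<Rightarrow> ennreal) \<Rightarrow> (real \<Rightarrow> ennreal) \<Rightarrow> ennreal" where
  "dist_modular g u = (\<integral>\<^sup>+t. g (distr_fun u t) * indicator {0..} t \<partial>lborel)"

lemma borel_measurable_mono_distr_fun:
  fixes g :: "ennreal \<Rightarrow> ennreal"
  assumes "u \<in> borel_measurable halfline" "mono g"
  shows "(\<lambda>t. g (distr_fun u t)) \<in> borel_measurable borel"
proof (rule borel_measurable_antimono)
  show "antimono (\<lambda>t. g (distr_fun u t))"
    using antimono_distr_fun[OF assms(1)] assms(2) unfolding antimono_def mono_def by blast
qed

lemma dist_modular_mono:
  assumes "v \<in> borel_measurable halfline" "mono g" "\<And>y. 0 \<le> y \<Longrightarrow> u y \<le> v y"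
  shows "dist_modular g u \<le> dist_modular g v"
  unfolding dist_modular_def
proof (intro nn_integral_mono mult_right_mono)
  show "g (distr_fun u t) \<le> g (distr_fun v t)" for t
    using assms by (intro monoD[OF \<open>mono g\<close>] distr_fun_mono) auto
qed simp

lemma dist_modular_cmult:
  assumes u: "u \<in> borel_measurable halfline" and g: "mono g" and c: "0 < c"
  shows "dist_modular g (\<lambda>y. ennreal c * u y) = ennreal c * dist_modular g u"
proof -
  have [measurable]: "(\<lambda>t. g (distr_fun u t)) \<in> borel_measurable borel"
    by (rule borel_measurable_mono_distr_fun[OF u g])
  have "dist_modular g (\<lambda>y. ennreal c * u y) = (\<integral>\<^sup>+x. g (distr_fun u (x / c)) * indicator {0..} x \<partial>lborel)"
    unfolding dist_modular_def using c by (simp add: distr_fun_cmult)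
  also have "\<dots> = ennreal c * (\<integral>\<^sup>+x. g (distr_fun u ((0 + c * x) / c)) * indicator {0..} (0 + c * x) \<partial>lborel)"
    using nn_integral_real_affine[of "\<lambda>x. g (distr_fun u (x / c)) * indicator {0..} x" c 0] c by simp
  also have "(\<integral>\<^sup>+x. g (distr_fun u ((0 + c * x) / c)) * indicator {0..} (0 + c * x) \<partial>lborel) = dist_modular g u"
    unfolding dist_modular_def using c by (intro nn_integral_cong) (auto simp: indicator_def zero_le_mult_iff)
  finally show ?thesis .
qed

lemma dist_modular_sum_cmult:
  assumes u: "u \<in> borel_measurable halfline" and "finite K" and g: "\<And>k. mono (g k)"
  shows "dist_modular (\<lambda>m. \<Sum>k\<in>K. c k * g k m) u = (\<Sum>k\<in>K. c k * dist_modular (g k) u)"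
proof -
  have [measurable]: "\<And>k. (\<lambda>t. g k (distr_fun u t)) \<in> borel_measurable borel"
    by (rule borel_measurable_mono_distr_fun[OF u g])
  have "dist_modular (\<lambda>m. \<Sum>k\<in>K. c k * g k m) u
      = (\<integral>\<^sup>+t. (\<Sum>k\<in>K. c k * (g k (distr_fun u t) * indicator {0..} t)) \<partial>lborel)"
    unfolding dist_modular_def by (simp add: sum_distrib_right mult.assoc)
  also have "\<dots> = (\<Sum>k\<in>K. c k * dist_modular (g k) u)"
    unfolding dist_modular_def using \<open>finite K\<close> by (simp add: nn_integral_sum nn_integral_cmult)
  finally show ?thesis .
qed

lemma dist_modular_zero: "g 0 = 0 \<Longrightarrow> dist_modular g (\<lambda>y. 0) = 0"
  by (simp add: dist_modular_def distr_fun_def)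

lemma dist_modular_tendsto:
  assumes u: "u \<in> borel_measurable halfline" and A: "\<And>n. mono (A n)"
    and le: "\<And>n m. A n m \<le> B m" and lim: "\<And>m. (\<lambda>n. A n m) \<longlonglongrightarrow> B m"
  shows "(\<lambda>n. dist_modular (A n) u) \<longlonglongrightarrow> dist_modular B u"
proof (rule Liminf_eq_Limsup)
  have [measurable]: "\<And>n. (\<lambda>t. A n (distr_fun u t)) \<in> borel_measurable borel"
    by (rule borel_measurable_mono_distr_fun[OF u A])
  have "liminf (\<lambda>n. A n (distr_fun u t) * indicator {0..} t) = B (distr_fun u t) * indicator {0..} t"
    for t :: real
    by (intro lim_imp_Liminf) (auto simp: indicator_def intro: lim)
  then have lower: "dist_modular B u \<le> liminf (\<lambda>n. dist_modular (A n) u)"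
    unfolding dist_modular_def
    using nn_integral_liminf[of "\<lambda>n t. A n (distr_fun u t) * indicator {0..} t" lborel] by simp
  have upper: "limsup (\<lambda>n. dist_modular (A n) u) \<le> dist_modular B u"
    unfolding dist_modular_def
    by (intro Limsup_bounded always_eventually allI nn_integral_mono mult_right_mono le) simp
  have "liminf (\<lambda>n. dist_modular (A n) u) \<le> limsup (\<lambda>n. dist_modular (A n) u)"
    by (rule Liminf_le_Limsup) simp
  then show "liminf (\<lambda>n. dist_modular (A n) u) = dist_modular B u"
    "limsup (\<lambda>n. dist_modular (A n) u) = dist_modular B u"
    using lower upper by (auto intro: antisym)
qed simp

lemma antimono_level_cut:
  fixes d :: "real \<Rightarrow> 'a::linorder"
  assumes anti: "antimono d" and "0 \<le> t\<^sub>0" "d t\<^sub>0 \<le> r"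
  obtains s where "0 \<le> s" "\<And>t. 0 \<le> t \<Longrightarrow> t < s \<Longrightarrow> r < d t" "\<And>t. s < t \<Longrightarrow> d t \<le> r"
proof -
  define S where "S = {t. 0 \<le> t \<and> d t \<le> r}"
  have ne: "S \<noteq> {}" and bdd: "bdd_below S"
    using assms unfolding S_def by (auto intro: bdd_belowI[of _ 0])
  have "0 \<le> Inf S"
    using ne by (intro cInf_greatest) (auto simp: S_def)
  moreover have "r < d t" if "0 \<le> t" "t < Inf S" for t
  proof (rule ccontr)
    assume "\<not> r < d t"
    then have "t \<in> S" using that by (simp add: S_def not_less)
    then show False using cInf_lower[OF _ bdd, of t] that by simp
  qed
  moreover have "d t \<le> r" if "Inf S < t" for t
  proof -
    have "\<exists>t'\<in>S. t' < t" using cInf_less_iff[OF ne bdd] that by simp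
    then obtain t' where "t' \<in> S" "t' < t" ..
    then have "d t \<le> d t'" using anti by (simp add: antimono_def)
    with \<open>t' \<in> S\<close> show ?thesis unfolding S_def by (metis mem_Collect_eq order.trans)
  qed
  ultimately show thesis by (rule that)
qed

lemma nn_integral_cut_distr_fun:
  assumes [measurable]: "u \<in> borel_measurable halfline" and s: "0 \<le> s"
  shows "(\<integral>\<^sup>+t. ennreal r * indicator {0..<s} t + distr_fun u t * indicator {s..} t \<partial>lborel)
    = ennreal r * ennreal s + (\<integral>\<^sup>+y. u y - ennreal s \<partial>halfline)"
  using s by (simp add: nn_integral_add nn_integral_cmult_indicator nn_integral_distr_fun_Ici)

lemma dist_modular_min_le:
  assumes "u \<in> borel_measurable halfline" "0 \<le> s"
  shows "dist_modular (\<lambda>m. min m (ennreal r)) u \<le> ennreal r * ennreal s + (\<integral>\<^sup>+y. u y - ennreal s \<partial>halfline)"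
proof -
  have "dist_modular (\<lambda>m. min m (ennreal r)) u
      \<le> (\<integral>\<^sup>+t. ennreal r * indicator {0..<s} t + distr_fun u t * indicator {s..} t \<partial>lborel)"
    unfolding dist_modular_def by (intro nn_integral_mono) (auto simp: indicator_def)
  then show ?thesis using nn_integral_cut_distr_fun[OF assms] by simp
qed

text \<open>The infimum over \<open>s\<close> in \<open>dist_modular_min_le\<close> is attained where \<open>distr_fun u\<close> crosses the level \<open>r\<close>.\<close>

lemma dist_modular_min_eq:
  assumes [measurable]: "u \<in> borel_measurable halfline" and r: "0 < r"
    and fin: "dist_modular (\<lambda>m. min m (ennreal r)) u \<noteq> \<infinity>"
  obtains s where "0 \<le> s"
    "dist_modular (\<lambda>m. min m (ennreal r)) u = ennreal r * ennreal s + (\<integral>\<^sup>+y. u y - ennreal s \<partial>halfline)"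
proof -
  have "\<exists>t\<^sub>0\<ge>0. distr_fun u t\<^sub>0 \<le> ennreal r"
  proof (rule ccontr)
    assume none: "\<not> ?thesis"
    have "dist_modular (\<lambda>m. min m (ennreal r)) u = (\<integral>\<^sup>+t. ennreal r * indicator {0..} (t::real) \<partial>lborel)"
      unfolding dist_modular_def
      by (rule nn_integral_cong) (use none in \<open>auto simp: indicator_def min_def\<close>)
    also have "\<dots> = \<infinity>"
      using r by (simp add: nn_integral_cmult_indicator emeasure_lborel_Ici ennreal_mult_top)
    finally show False using fin by simp
  qed
  then obtain s where s: "0 \<le> s" and below: "\<And>t. 0 \<le> t \<Longrightarrow> t < s \<Longrightarrow> ennreal r < distr_fun u t"
    and above: "\<And>t. s < t \<Longrightarrow> distr_fun u t \<le> ennreal r"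
    using antimono_level_cut[OF antimono_distr_fun] by (metis assms(1))
  have "AE t in lborel. min (distr_fun u t) (ennreal r) * indicator {0..} t
      = ennreal r * indicator {0..<s} t + distr_fun u t * indicator {s..} t"
    using AE_lborel_singleton[of s]
  proof eventually_elim
    case (elim t)
    then consider "t < 0" | "0 \<le> t" "t < s" | "s < t" by linarith
    then show ?case
      by cases (use s below[of t] above[of t] in \<open>auto simp: indicator_def min_def\<close>)
  qed
  then have "dist_modular (\<lambda>m. min m (ennreal r)) u
      = (\<integral>\<^sup>+t. ennreal r * indicator {0..<s} t + distr_fun u t * indicator {s..} t \<partial>lborel)"
    unfolding dist_modular_def by (rule nn_integral_cong_AE)
  then show thesis using that s nn_integral_cut_distr_fun[OF assms(1) s] by simp
qed

lemma ennreal_add_minus_le: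
  fixes a b :: ennreal
  assumes "0 \<le> x" "0 \<le> y"
  shows "(a + b) - ennreal (x + y) \<le> (a - ennreal x) + (b - ennreal y)"
proof -
  have "a \<le> (a - ennreal x) + ennreal x" "b \<le> (b - ennreal y) + ennreal y"
    by (simp_all add: diff_add_self_ennreal not_le less_imp_le)
  from add_mono[OF this] have "a + b \<le> ennreal (x + y) + ((a - ennreal x) + (b - ennreal y))"
    using assms by (simp add: ennreal_plus ac_simps)
  then show ?thesis by (simp add: ennreal_minus_le_iff)
qed

lemma dist_modular_min_subadditive:
  assumes [measurable]: "u \<in> borel_measurable halfline" "v \<in> borel_measurable halfline" and r: "0 \<le> r"
  shows "dist_modular (\<lambda>m. min m (ennreal r)) (\<lambda>y. u y + v y)
    \<le> dist_modular (\<lambda>m. min m (ennreal r)) u + dist_modular (\<lambda>m. min m (ennreal r)) v"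
    (is "?\<Phi> (\<lambda>y. u y + v y) \<le> ?\<Phi> u + ?\<Phi> v")
proof (cases "r = 0 \<or> ?\<Phi> u = \<infinity> \<or> ?\<Phi> v = \<infinity>")
  case True
  then show ?thesis by (auto simp: dist_modular_def)
next
  case False
  then have "0 < r" using r by simp
  obtain s\<^sub>1 where s\<^sub>1: "0 \<le> s\<^sub>1" "?\<Phi> u = ennreal r * ennreal s\<^sub>1 + (\<integral>\<^sup>+y. u y - ennreal s\<^sub>1 \<partial>halfline)"
    using dist_modular_min_eq[of u r] \<open>0 < r\<close> False by auto
  obtain s\<^sub>2 where s\<^sub>2: "0 \<le> s\<^sub>2" "?\<Phi> v = ennreal r * ennreal s\<^sub>2 + (\<integral>\<^sup>+y. v y - ennreal s\<^sub>2 \<partial>halfline)"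
    using dist_modular_min_eq[of v r] \<open>0 < r\<close> False by auto
  have "?\<Phi> (\<lambda>y. u y + v y)
      \<le> ennreal r * ennreal (s\<^sub>1 + s\<^sub>2) + (\<integral>\<^sup>+y. u y + v y - ennreal (s\<^sub>1 + s\<^sub>2) \<partial>halfline)"
    using s\<^sub>1 s\<^sub>2 by (intro dist_modular_min_le) auto
  also have "(\<integral>\<^sup>+y. u y + v y - ennreal (s\<^sub>1 + s\<^sub>2) \<partial>halfline)
      \<le> (\<integral>\<^sup>+y. (u y - ennreal s\<^sub>1) + (v y - ennreal s\<^sub>2) \<partial>halfline)"
    using s\<^sub>1 s\<^sub>2 by (intro nn_integral_mono ennreal_add_minus_le) auto
  also have "\<dots> = (\<integral>\<^sup>+y. u y - ennreal s\<^sub>1 \<partial>halfline) + (\<integral>\<^sup>+y. v y - ennreal s\<^sub>2 \<partial>halfline)"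
    by (rule nn_integral_add) auto
  finally show ?thesis
    using s\<^sub>1 s\<^sub>2 by (simp add: ennreal_plus distrib_left ac_simps add_mono)
qed

lemma nn_integral_min_le_dist_modular_minus:
  assumes [measurable]: "u \<in> borel_measurable halfline" and s: "0 \<le> s"
  shows "(\<integral>\<^sup>+y. min (u y) (ennreal s) \<partial>halfline) \<le> dist_modular (\<lambda>m. m - ennreal r) u + ennreal r * ennreal s"
proof -
  have "(\<integral>\<^sup>+y. min (u y) (ennreal s) \<partial>halfline) = (\<integral>\<^sup>+t. distr_fun u t * indicator {0..<s} t \<partial>lborel)"
    by (simp add: nn_integral_distr_fun_Ico s)
  also have "\<dots> \<le> (\<integral>\<^sup>+t. (distr_fun u t - ennreal r) * indicator {0..} t + ennreal r * indicator {0..<s} t \<partial>lborel)"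
    by (intro nn_integral_mono) (auto simp: indicator_def diff_add_self_ennreal)
  also have "\<dots> = dist_modular (\<lambda>m. m - ennreal r) u + ennreal r * ennreal s"
    using s by (simp add: nn_integral_add nn_integral_cmult_indicator dist_modular_def)
  finally show ?thesis .
qed

lemma nn_integral_min_eq_distr_fun_minus:
  assumes [measurable]: "u \<in> borel_measurable halfline" and s: "0 \<le> s"
    and above: "\<And>t. 0 \<le> t \<Longrightarrow> t < s \<Longrightarrow> ennreal r \<le> distr_fun u t"
  shows "(\<integral>\<^sup>+y. min (u y) (ennreal s) \<partial>halfline)
    = (\<integral>\<^sup>+t. (distr_fun u t - ennreal r) * indicator {0..<s} t \<partial>lborel) + ennreal r * ennreal s"
proof -
  have "(\<integral>\<^sup>+y. min (u y) (ennreal s) \<partial>halfline) = (\<integral>\<^sup>+t. distr_fun u t * indicator {0..<s} t \<partial>lborel)"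
    by (simp add: nn_integral_distr_fun_Ico s)
  also have "\<dots> = (\<integral>\<^sup>+t. (distr_fun u t - ennreal r) * indicator {0..<s} t + ennreal r * indicator {0..<s} t \<partial>lborel)"
    by (intro nn_integral_cong) (auto simp: indicator_def diff_add_self_ennreal above)
  also have "\<dots> = (\<integral>\<^sup>+t. (distr_fun u t - ennreal r) * indicator {0..<s} t \<partial>lborel) + ennreal r * ennreal s"
    using s by (simp add: nn_integral_add nn_integral_cmult_indicator)
  finally show ?thesis .
qed

lemma dist_modular_minus_eq_cut:
  assumes [measurable]: "u \<in> borel_measurable halfline"
    and above: "\<And>t. s < t \<Longrightarrow> distr_fun u t \<le> ennreal r"
  shows "dist_modular (\<lambda>m. m - ennreal r) u = (\<integral>\<^sup>+t. (distr_fun u t - ennreal r) * indicator {0..<s} t \<partial>lborel)"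
  unfolding dist_modular_def
proof (rule nn_integral_cong_AE)
  show "AE t in lborel. (distr_fun u t - ennreal r) * indicator {0..} t
      = (distr_fun u t - ennreal r) * indicator {0..<s} t"
    using AE_lborel_singleton[of s]
  proof eventually_elim
    case (elim t)
    show ?case
    proof (cases "s < t")
      case True
      then have "distr_fun u t - ennreal r = 0"
        using above[of t] by (simp add: diff_eq_0_iff_ennreal le_less_trans)
      then show ?thesis by simp
    qed (use elim in \<open>auto simp: indicator_def\<close>)
  qed
qed

lemma dist_modular_minus_SUP:
  assumes [measurable]: "u \<in> borel_measurable halfline"
  shows "dist_modular (\<lambda>m. m - ennreal r) u
    = (SUP s\<in>{s. 0 \<le> s \<and> (\<forall>t. 0 \<le> t \<longrightarrow> t < s \<longrightarrow> ennreal r \<le> distr_fun u t)}.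
        \<integral>\<^sup>+t. (distr_fun u t - ennreal r) * indicator {0..<s} t \<partial>lborel)"
    (is "?\<Phi> = (SUP s\<in>?S. ?X s)")
proof (rule antisym)
  show "(SUP s\<in>?S. ?X s) \<le> ?\<Phi>"
    unfolding dist_modular_def by (intro SUP_least nn_integral_mono) (auto simp: indicator_def)
  show "?\<Phi> \<le> (SUP s\<in>?S. ?X s)"
  proof (cases "\<exists>t\<^sub>0\<ge>0. distr_fun u t\<^sub>0 \<le> ennreal r")
    case True
    then obtain s where s: "0 \<le> s" and below: "\<And>t. 0 \<le> t \<Longrightarrow> t < s \<Longrightarrow> ennreal r < distr_fun u t"
      and above: "\<And>t. s < t \<Longrightarrow> distr_fun u t \<le> ennreal r"
      using antimono_level_cut[OF antimono_distr_fun] by (metis assms)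
    have "s \<in> ?S" using s below by (auto intro: less_imp_le)
    then show ?thesis
      using dist_modular_minus_eq_cut[OF assms above] by (auto intro: SUP_upper)
  next
    case False
    define h where "h t = distr_fun u t - ennreal r" for t
    have [measurable]: "h \<in> borel_measurable borel" unfolding h_def by measurable
    have "(\<Union>n. {0..<real n}) = {0::real..}"
      by (auto intro: reals_Archimedean2)
    then have "?\<Phi> = (SUP n. emeasure (density lborel h) {0..<real n})"
      by (subst SUP_emeasure_incseq)
         (auto simp: incseq_def emeasure_density dist_modular_def h_def)
    also have "\<dots> = (SUP n. ?X (real n))"
      by (simp add: emeasure_density h_def)
    also have "\<dots> \<le> (SUP s\<in>?S. ?X s)"
    proof (intro SUP_least SUP_upper)
      fix n
      have "ennreal r < distr_fun u t" if "0 \<le> t" for t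
        by (meson False not_le that)
      then show "real n \<in> ?S" by (auto intro: less_imp_le)
    qed
    finally show ?thesis .
  qed
qed

lemma dist_modular_minus_superadditive:
  assumes [measurable]: "u \<in> borel_measurable halfline" "v \<in> borel_measurable halfline" and r: "0 \<le> r"
  shows "dist_modular (\<lambda>m. m - ennreal r) u + dist_modular (\<lambda>m. m - ennreal r) v
    \<le> dist_modular (\<lambda>m. m - ennreal r) (\<lambda>y. u y + v y)"
    (is "?\<Phi> u + ?\<Phi> v \<le> ?\<Phi> (\<lambda>y. u y + v y)")
proof -
  define S where "S w = {s. 0 \<le> s \<and> (\<forall>t. 0 \<le> t \<longrightarrow> t < s \<longrightarrow> ennreal r \<le> distr_fun w t)}" for w
  define X where "X w s = (\<integral>\<^sup>+t. (distr_fun w t - ennreal r) * indicator {0..<s} t \<partial>lborel)" for w s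
  have \<Phi>: "?\<Phi> w = (SUP s\<in>S w. X w s)" if "w \<in> borel_measurable halfline" for w
    unfolding S_def X_def by (rule dist_modular_minus_SUP[OF that])
  have ne: "S w \<noteq> {}" for w
    by (auto simp: S_def intro!: exI[of _ 0])
  have X_le: "X u s\<^sub>1 + X v s\<^sub>2 \<le> ?\<Phi> (\<lambda>y. u y + v y)" if "s\<^sub>1 \<in> S u" "s\<^sub>2 \<in> S v" for s\<^sub>1 s\<^sub>2
  proof -
    have s: "0 \<le> s\<^sub>1" "0 \<le> s\<^sub>2" using that by (auto simp: S_def)
    have "(\<integral>\<^sup>+y. min (u y) (ennreal s\<^sub>1) \<partial>halfline) = X u s\<^sub>1 + ennreal r * ennreal s\<^sub>1"
      "(\<integral>\<^sup>+y. min (v y) (ennreal s\<^sub>2) \<partial>halfline) = X v s\<^sub>2 + ennreal r * ennreal s\<^sub>2"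
      unfolding X_def using that s by (auto simp: S_def intro!: nn_integral_min_eq_distr_fun_minus)
    then have "X u s\<^sub>1 + X v s\<^sub>2 + ennreal r * ennreal (s\<^sub>1 + s\<^sub>2)
        = (\<integral>\<^sup>+y. min (u y) (ennreal s\<^sub>1) \<partial>halfline) + (\<integral>\<^sup>+y. min (v y) (ennreal s\<^sub>2) \<partial>halfline)"
      using s by (simp add: ennreal_plus distrib_left ac_simps)
    also have "\<dots> = (\<integral>\<^sup>+y. min (u y) (ennreal s\<^sub>1) + min (v y) (ennreal s\<^sub>2) \<partial>halfline)"
      by (rule nn_integral_add[symmetric]) auto
    also have "\<dots> \<le> (\<integral>\<^sup>+y. min (u y + v y) (ennreal (s\<^sub>1 + s\<^sub>2)) \<partial>halfline)"
      using s by (intro nn_integral_mono) (auto simp: ennreal_plus intro: add_mono)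
    also have "\<dots> \<le> ?\<Phi> (\<lambda>y. u y + v y) + ennreal r * ennreal (s\<^sub>1 + s\<^sub>2)"
      using s by (intro nn_integral_min_le_dist_modular_minus) auto
    finally show ?thesis
      by (simp add: ennreal_add_left_cancel_le ennreal_mult_eq_top_iff add.commute)
  qed
  have "?\<Phi> u + ?\<Phi> v = (SUP s\<^sub>1\<in>S u. X u s\<^sub>1 + ?\<Phi> v)"
    by (simp add: \<Phi> ennreal_SUP_add_left[OF ne])
  also have "\<dots> \<le> ?\<Phi> (\<lambda>y. u y + v y)"
  proof (rule SUP_least)
    fix s\<^sub>1 assume "s\<^sub>1 \<in> S u"
    have "X u s\<^sub>1 + ?\<Phi> v = (SUP s\<^sub>2\<in>S v. X u s\<^sub>1 + X v s\<^sub>2)"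
      by (simp add: \<Phi> ennreal_SUP_add_right[OF ne])
    also have "\<dots> \<le> ?\<Phi> (\<lambda>y. u y + v y)"
      by (rule SUP_least) (rule X_le[OF \<open>s\<^sub>1 \<in> S u\<close>])
    finally show "X u s\<^sub>1 + ?\<Phi> v \<le> ?\<Phi> (\<lambda>y. u y + v y)" .
  qed
  finally show ?thesis .
qed

section \<open>Piecewise linear approximation of concave and convex functions\<close>

definition grid_slope :: "(real \<Rightarrow> real) \<Rightarrow> real \<Rightarrow> nat \<Rightarrow> nat \<Rightarrow> real" where
  "grid_slope \<phi> h N k = (if 1 \<le> k \<and> k \<le> N then (\<phi> (real k * h) - \<phi> (real (k - 1) * h)) / h else 0)"

lemma grid_slope_0 [simp]: "grid_slope \<phi> h N 0 = 0"
  by (simp add: grid_slope_def)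

lemma grid_slope_nonneg: "mono_on {0..} \<phi> \<Longrightarrow> 0 < h \<Longrightarrow> 0 \<le> grid_slope \<phi> h N k"
  by (auto simp: grid_slope_def intro!: divide_nonneg_pos mono_onD[of "{0..}" \<phi>] mult_right_mono)

lemma grid_slope_step:
  "0 < h \<Longrightarrow> k \<le> N \<Longrightarrow> \<phi> (real (k - 1) * h) + grid_slope \<phi> h N k * h = \<phi> (real k * h)"
  by (cases k) (auto simp: grid_slope_def)

lemma grid_slope_antimono:
  assumes conc: "concave_on {0..} \<phi>" and mono: "mono_on {0..} \<phi>" and h: "0 < h" and "1 \<le> k"
  shows "grid_slope \<phi> h N (Suc k) \<le> grid_slope \<phi> h N k"
proof (cases "Suc k \<le> N")
  case True
  let ?x = "real (k - 1) * h"
  have "(1 - 1/2) * \<phi> ?x + 1/2 * \<phi> (?x + 2 * h) \<le> \<phi> ((1 - 1/2) *\<^sub>R ?x + (1/2) *\<^sub>R (?x + 2 * h))"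
    by (rule concave_onD[OF conc]) (use h in auto)
  moreover have "(1 - 1/2) *\<^sub>R ?x + (1/2::real) *\<^sub>R (?x + 2 * h) = ?x + h" by (simp add: field_simps)
  ultimately have "\<phi> (?x + 2 * h) - \<phi> (?x + h) \<le> \<phi> (?x + h) - \<phi> ?x" by simp
  moreover have "?x + h = real k * h" "?x + 2 * h = real (Suc k) * h"
    using \<open>1 \<le> k\<close> by (auto simp: algebra_simps of_nat_diff)
  ultimately show ?thesis using True \<open>1 \<le> k\<close> h by (simp add: grid_slope_def divide_right_mono)
qed (use grid_slope_nonneg[OF mono h] in \<open>simp add: grid_slope_def\<close>)

lemma grid_slope_mono:
  assumes conv: "convex_on {0..} \<phi>" and h: "0 < h" and "1 \<le> k" "Suc k \<le> N"
  shows "grid_slope \<phi> h N k \<le> grid_slope \<phi> h N (Suc k)"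
proof -
  let ?x = "real (k - 1) * h"
  have "\<phi> ((1 - 1/2) *\<^sub>R ?x + (1/2) *\<^sub>R (?x + 2 * h)) \<le> (1 - 1/2) * \<phi> ?x + 1/2 * \<phi> (?x + 2 * h)"
    by (rule convex_onD[OF conv]) (use h in auto)
  moreover have "(1 - 1/2) *\<^sub>R ?x + (1/2::real) *\<^sub>R (?x + 2 * h) = ?x + h" by (simp add: field_simps)
  ultimately have "\<phi> (?x + h) - \<phi> ?x \<le> \<phi> (?x + 2 * h) - \<phi> (?x + h)" by simp
  moreover have "?x + h = real k * h" "?x + 2 * h = real (Suc k) * h"
    using \<open>1 \<le> k\<close> by (auto simp: algebra_simps of_nat_diff)
  ultimately show ?thesis using assms by (simp add: grid_slope_def divide_right_mono)
qed

lemma concave_chord_le: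
  assumes conc: "concave_on {0..} \<phi>" and mono: "mono_on {0..} \<phi>" and h: "0 < h"
    and k: "1 \<le> k" and m: "real (k - 1) * h \<le> m" "m \<le> real k * h"
  shows "\<phi> (real (k - 1) * h) + grid_slope \<phi> h N k * (m - real (k - 1) * h) \<le> \<phi> m"
proof (cases "k \<le> N")
  case True
  have "concave_on {real (k - 1) * h..real k * h} \<phi>"
    using conc unfolding concave_on_def by (rule convex_on_subset) (use h in auto)
  from concave_onD_Icc'[OF this, of m] m
  have "(\<phi> (real k * h) - \<phi> (real (k - 1) * h)) / (real k * h - real (k - 1) * h) * (m - real (k - 1) * h)
      + \<phi> (real (k - 1) * h) \<le> \<phi> m"
    by auto
  moreover have "real k * h - real (k - 1) * h = h" using k by (simp add: of_nat_diff algebra_simps)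
  ultimately show ?thesis using True k by (simp add: grid_slope_def)
next
  case False
  have "0 \<le> real (k - 1) * h" using h by simp
  then have "\<phi> (real (k - 1) * h) \<le> \<phi> m"
    using m by (intro mono_onD[OF mono]) auto
  then show ?thesis using False by (simp add: grid_slope_def)
qed

lemma convex_secant_le:
  assumes conv: "convex_on {0..} \<phi>" and h: "0 < h" and k: "1 \<le> k" "k \<le> N" and m: "real k * h \<le> m"
  shows "\<phi> (real k * h) + grid_slope \<phi> h N k * (m - real k * h) \<le> \<phi> m"
proof (cases "m = real k * h")
  case False
  then have mk: "real k * h < m" using m by simp
  have rk: "real (k - 1) * h = real k * h - h" using k by (simp add: of_nat_diff algebra_simps)
  have "0 \<le> real (k - 1) * h" "real (k - 1) * h < real k * h" using rk h k by auto
  then have "(\<phi> (real (k - 1) * h) - \<phi> (real k * h)) / (real (k - 1) * h - real k * h)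
      \<le> (\<phi> (real k * h) - \<phi> m) / (real k * h - m)"
    using convex_on_slope_le[OF conv, of "real (k - 1) * h" m "real k * h"] mk by (auto intro: order.trans)
  also have "(\<phi> (real (k - 1) * h) - \<phi> (real k * h)) / (real (k - 1) * h - real k * h) = grid_slope \<phi> h N k"
    using k h rk by (simp add: grid_slope_def field_simps)
  also have "(\<phi> (real k * h) - \<phi> m) / (real k * h - m) = (\<phi> m - \<phi> (real k * h)) / (m - real k * h)"
    by (metis minus_diff_eq minus_divide_divide)
  finally show ?thesis using mk by (simp add: le_divide_eq)
qed simp

definition concave_interp :: "(real \<Rightarrow> real) \<Rightarrow> real \<Rightarrow> nat \<Rightarrow> nat \<Rightarrow> real \<Rightarrow> real" where
  "concave_interp \<phi> h N j m = grid_slope \<phi> h N 1 * m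
     + (\<Sum>k\<in>{1..j}. (grid_slope \<phi> h N (Suc k) - grid_slope \<phi> h N k) * max (m - real k * h) 0)"

text \<open>\<open>concave_interp \<phi> h N N\<close> interpolates \<open>\<phi>\<close> linearly between the grid points \<open>0, h, \<dots>, N h\<close>
  and is constant beyond \<open>N h\<close>; the partial sums up to \<open>j\<close> agree with it on \<open>[0, (j + 1) h]\<close>.\<close>

lemma concave_interp_props:
  assumes conc: "concave_on {0..} \<phi>" and mono: "mono_on {0..} \<phi>" and h: "0 < h" and \<phi>0: "\<phi> 0 = 0"
  shows "j \<le> N \<Longrightarrow> (\<forall>m. 0 \<le> m \<longrightarrow> m \<le> real (Suc j) * h \<longrightarrow> concave_interp \<phi> h N j m \<le> \<phi> m)
     \<and> (\<forall>m. real j * h \<le> m \<longrightarrow> concave_interp \<phi> h N j m = \<phi> (real j * h) + grid_slope \<phi> h N (Suc j) * (m - real j * h))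
     \<and> (\<forall>m. 0 \<le> m \<longrightarrow> m \<le> real (Suc j) * h \<longrightarrow> \<phi> (max (m - h) 0) \<le> concave_interp \<phi> h N j m)"
proof (induction j)
  case 0
  have "grid_slope \<phi> h N 1 * m \<le> \<phi> m" if "0 \<le> m" "m \<le> h" for m
    using concave_chord_le[OF conc mono h, of 1 m N] that \<phi>0 by simp
  moreover have "\<phi> (max (m - h) 0) = 0" if "m \<le> h" for m using that \<phi>0 by (simp add: max_def)
  ultimately show ?case using \<phi>0 grid_slope_nonneg[OF mono h] by (auto simp: concave_interp_def)
next
  case (Suc j)
  then have IH: "\<forall>m. 0 \<le> m \<longrightarrow> m \<le> real (Suc j) * h \<longrightarrow> concave_interp \<phi> h N j m \<le> \<phi> m"
     "\<forall>m. real j * h \<le> m \<longrightarrow> concave_interp \<phi> h N j m = \<phi> (real j * h) + grid_slope \<phi> h N (Suc j) * (m - real j * h)"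
     "\<forall>m. 0 \<le> m \<longrightarrow> m \<le> real (Suc j) * h \<longrightarrow> \<phi> (max (m - h) 0) \<le> concave_interp \<phi> h N j m"
    and jN: "Suc j \<le> N" by auto
  have step: "concave_interp \<phi> h N (Suc j) m = concave_interp \<phi> h N j m
      + (grid_slope \<phi> h N (Suc (Suc j)) - grid_slope \<phi> h N (Suc j)) * max (m - real (Suc j) * h) 0" for m
    by (simp add: concave_interp_def)
  have exact: "concave_interp \<phi> h N (Suc j) m
      = \<phi> (real (Suc j) * h) + grid_slope \<phi> h N (Suc (Suc j)) * (m - real (Suc j) * h)"
    if "real (Suc j) * h \<le> m" for m
  proof -
    have "real j * h \<le> m" using that h by (simp add: algebra_simps)
    then have "concave_interp \<phi> h N (Suc j) m = \<phi> (real j * h) + grid_slope \<phi> h N (Suc j) * (m - real j * h)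
        + (grid_slope \<phi> h N (Suc (Suc j)) - grid_slope \<phi> h N (Suc j)) * (m - real (Suc j) * h)"
      using IH(2) that by (simp add: step max_def)
    also have "\<phi> (real j * h) = \<phi> (real (Suc j) * h) - grid_slope \<phi> h N (Suc j) * h"
      using grid_slope_step[OF h jN, of \<phi>] by simp
    finally show ?thesis by (simp add: algebra_simps)
  qed
  have below: "concave_interp \<phi> h N (Suc j) m = concave_interp \<phi> h N j m" if "m \<le> real (Suc j) * h" for m
    using that by (simp add: step max_def)
  have upper: "concave_interp \<phi> h N (Suc j) m \<le> \<phi> m" if "0 \<le> m" "m \<le> real (Suc (Suc j)) * h" for m
  proof (cases "m \<le> real (Suc j) * h")
    case False
    then show ?thesis
      using exact concave_chord_le[OF conc mono h, of "Suc (Suc j)" m N] that by simp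
  qed (use below IH(1) that in auto)
  have lower: "\<phi> (max (m - h) 0) \<le> concave_interp \<phi> h N (Suc j) m" if "0 \<le> m" "m \<le> real (Suc (Suc j)) * h" for m
  proof (cases "m \<le> real (Suc j) * h")
    case False
    have "\<phi> (max (m - h) 0) \<le> \<phi> (real (Suc j) * h)"
      using that h by (intro mono_onD[OF mono]) (auto simp: algebra_simps)
    also have "\<dots> \<le> concave_interp \<phi> h N (Suc j) m"
      using exact False grid_slope_nonneg[OF mono h] by simp
    finally show ?thesis .
  qed (use below IH(3) that in auto)
  show ?case using upper lower exact by auto
qed

lemma concave_interp_le:
  assumes conc: "concave_on {0..} \<phi>" and mono: "mono_on {0..} \<phi>" and h: "0 < h" and \<phi>0: "\<phi> 0 = 0"
    and m: "0 \<le> m"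
  shows "concave_interp \<phi> h N N m \<le> \<phi> m"
proof (cases "m \<le> real (Suc N) * h")
  case False
  then have Nm: "real N * h \<le> m" using h by (simp add: algebra_simps)
  then have "concave_interp \<phi> h N N m = \<phi> (real N * h)"
    using concave_interp_props[OF assms(1-4), of N N] by (simp add: grid_slope_def)
  also have "\<dots> \<le> \<phi> m" using Nm h m by (intro mono_onD[OF mono]) auto
  finally show ?thesis .
qed (use concave_interp_props[OF assms(1-4), of N N] m in auto)

lemma concave_interp_eq_sum_min:
  "(\<Sum>k\<in>{1..N}. (grid_slope \<phi> h N k - grid_slope \<phi> h N (Suc k)) * min m (real k * h)) = concave_interp \<phi> h N N m"
proof -
  let ?d = "grid_slope \<phi> h N"
  have "(\<Sum>k\<in>{1..N}. ?d (Suc k) - ?d k) = ?d (Suc N) - ?d 1"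
    by (cases N) (simp_all add: sum_Suc_diff)
  then have telescope: "(\<Sum>k\<in>{1..N}. ?d k - ?d (Suc k)) = ?d 1"
    by (simp add: sum_subtractf grid_slope_def[of _ _ _ "Suc N"])
  have "(\<Sum>k\<in>{1..N}. (?d k - ?d (Suc k)) * min m (real k * h))
      = (\<Sum>k\<in>{1..N}. m * (?d k - ?d (Suc k)) + (?d (Suc k) - ?d k) * max (m - real k * h) 0)"
    by (intro sum.cong refl) (auto simp: min_def max_def algebra_simps)
  also have "\<dots> = m * ?d 1 + (\<Sum>k\<in>{1..N}. (?d (Suc k) - ?d k) * max (m - real k * h) 0)"
    using telescope by (simp add: sum.distrib flip: sum_distrib_left)
  finally show ?thesis by (simp add: concave_interp_def mult.commute)
qed

definition convex_interp :: "(real \<Rightarrow> real) \<Rightarrow> real \<Rightarrow> nat \<Rightarrow> nat \<Rightarrow> real \<Rightarrow> real" where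
  "convex_interp \<phi> h N j m = (\<Sum>k\<in>{1..j}. (grid_slope \<phi> h N k - grid_slope \<phi> h N (k - 1)) * max (m - real k * h) 0)"

text \<open>\<open>convex_interp \<phi> h N N\<close> is the linear interpolant of \<open>\<phi>\<close> on the grid \<open>0, h, \<dots>, N h\<close>,
  continued with the last slope, and shifted to the right by \<open>h\<close>; the shift keeps it below \<open>\<phi>\<close>.\<close>

lemma convex_interp_props:
  assumes conv: "convex_on {0..} \<phi>" and mono: "mono_on {0..} \<phi>" and h: "0 < h" and \<phi>0: "\<phi> 0 = 0"
  shows "j \<le> N \<Longrightarrow> (\<forall>m. 0 \<le> m \<longrightarrow> convex_interp \<phi> h N j m \<le> \<phi> m)
     \<and> (\<forall>m. real j * h \<le> m \<longrightarrow> convex_interp \<phi> h N j m = \<phi> (real (j - 1) * h) + grid_slope \<phi> h N j * (m - real j * h))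
     \<and> (\<forall>m. 0 \<le> m \<longrightarrow> m \<le> real (Suc j) * h \<longrightarrow> \<phi> (max (m - 2 * h) 0) \<le> convex_interp \<phi> h N j m)"
proof (induction j)
  case 0
  have "0 \<le> \<phi> m" if "0 \<le> m" for m using mono_onD[OF mono, of 0 m] that \<phi>0 by simp
  moreover have "\<phi> (max (m - 2 * h) 0) = 0" if "m \<le> h" for m using that \<phi>0 h by (simp add: max_def)
  ultimately show ?case using \<phi>0 by (auto simp: convex_interp_def)
next
  case (Suc j)
  then have IH: "\<forall>m. 0 \<le> m \<longrightarrow> convex_interp \<phi> h N j m \<le> \<phi> m"
     "\<forall>m. real j * h \<le> m \<longrightarrow> convex_interp \<phi> h N j m = \<phi> (real (j - 1) * h) + grid_slope \<phi> h N j * (m - real j * h)"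
     "\<forall>m. 0 \<le> m \<longrightarrow> m \<le> real (Suc j) * h \<longrightarrow> \<phi> (max (m - 2 * h) 0) \<le> convex_interp \<phi> h N j m"
    and jN: "Suc j \<le> N" by auto
  have step: "convex_interp \<phi> h N (Suc j) m = convex_interp \<phi> h N j m
      + (grid_slope \<phi> h N (Suc j) - grid_slope \<phi> h N j) * max (m - real (Suc j) * h) 0" for m
    by (simp add: convex_interp_def)
  have exact: "convex_interp \<phi> h N (Suc j) m = \<phi> (real j * h) + grid_slope \<phi> h N (Suc j) * (m - real (Suc j) * h)"
    if "real (Suc j) * h \<le> m" for m
  proof -
    have "real j * h \<le> m" using that h by (simp add: algebra_simps)
    then have "convex_interp \<phi> h N (Suc j) m = \<phi> (real (j - 1) * h) + grid_slope \<phi> h N j * (m - real j * h)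
        + (grid_slope \<phi> h N (Suc j) - grid_slope \<phi> h N j) * (m - real (Suc j) * h)"
      using IH(2) that by (simp add: step max_def)
    also have "\<phi> (real (j - 1) * h) = \<phi> (real j * h) - grid_slope \<phi> h N j * h"
      using grid_slope_step[OF h, of j N \<phi>] jN by simp
    finally show ?thesis by (simp add: algebra_simps)
  qed
  have below: "convex_interp \<phi> h N (Suc j) m = convex_interp \<phi> h N j m" if "m \<le> real (Suc j) * h" for m
    using that by (simp add: step max_def)
  have upper: "convex_interp \<phi> h N (Suc j) m \<le> \<phi> m" if "0 \<le> m" for m
  proof (cases "m \<le> real (Suc j) * h")
    case False
    then have "real (Suc j) * h \<le> m" by simp
    moreover have "\<phi> (real j * h) \<le> \<phi> (real (Suc j) * h)" using h by (intro mono_onD[OF mono]) auto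
    ultimately have "convex_interp \<phi> h N (Suc j) m
        \<le> \<phi> (real (Suc j) * h) + grid_slope \<phi> h N (Suc j) * (m - real (Suc j) * h)"
      using exact by simp
    also have "\<dots> \<le> \<phi> m"
      using \<open>real (Suc j) * h \<le> m\<close> by (intro convex_secant_le[OF conv h _ jN]) simp_all
    finally show ?thesis .
  qed (use below IH(1) that in auto)
  have lower: "\<phi> (max (m - 2 * h) 0) \<le> convex_interp \<phi> h N (Suc j) m"
    if "0 \<le> m" "m \<le> real (Suc (Suc j)) * h" for m
  proof (cases "m \<le> real (Suc j) * h")
    case False
    have "\<phi> (max (m - 2 * h) 0) \<le> \<phi> (real j * h)"
      using that h by (intro mono_onD[OF mono]) (auto simp: algebra_simps)
    also have "\<dots> \<le> convex_interp \<phi> h N (Suc j) m"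
      using exact False grid_slope_nonneg[OF mono h] by simp
    finally show ?thesis .
  qed (use below IH(3) that in auto)
  show ?case using upper lower exact by auto
qed

lemma phi_bij_grid_tendsto:
  assumes \<phi>: "phi_bij \<phi>" and x: "0 \<le> x" and c: "0 \<le> c"
    and upper: "\<And>n. g n \<le> \<phi> x"
    and lower: "\<And>n. x \<le> real n + 1 \<Longrightarrow> \<phi> (max (x - c / (real n + 1)) 0) \<le> g n"
  shows "g \<longlonglongrightarrow> \<phi> x"
proof (rule tendsto_sandwich[OF _ _ _ tendsto_const])
  obtain N :: nat where N: "x \<le> real N" using real_arch_simple by blast
  have "x \<le> real n + 1" if "N \<le> n" for n
  proof -
    have "real N \<le> real n" using that by simp
    then show ?thesis using N by linarith
  qed
  then show "eventually (\<lambda>n. \<phi> (max (x - c / (real n + 1)) 0) \<le> g n) sequentially"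
    by (auto intro!: eventually_sequentiallyI[of N] lower)
  show "eventually (\<lambda>n. g n \<le> \<phi> x) sequentially" by (simp add: upper)
  show "(\<lambda>n. \<phi> (max (x - c / (real n + 1)) 0)) \<longlonglongrightarrow> \<phi> x"
  proof (cases "x = 0")
    case True
    then show ?thesis using c by (simp add: max_def)
  next
    case False
    have "(\<lambda>n. c / (real n + 1)) \<longlonglongrightarrow> 0"
      using LIMSEQ_Suc[OF lim_const_over_n[of c]] by (simp add: add.commute)
    then have "(\<lambda>n. max (x - c / (real n + 1)) 0) \<longlonglongrightarrow> max (x - 0) 0"
      by (intro tendsto_intros)
    then have lim: "(\<lambda>n. max (x - c / (real n + 1)) 0) \<longlonglongrightarrow> x" using x by simp
    have "isCont \<phi> x" using phi_bij_isCont[OF \<phi>] x False by simp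
    from isCont_tendsto_compose[OF this lim] show ?thesis .
  qed
qed

lemma phi_bij_tendsto_top: "phi_bij \<phi> \<Longrightarrow> (\<lambda>n. ennreal (\<phi> (real n + 1))) \<longlonglongrightarrow> \<infinity>"
  unfolding infinity_ennreal_def tendsto_top_iff_ennreal
proof (intro allI impI)
  fix l :: real assume \<phi>: "phi_bij \<phi>" and "0 \<le> l"
  obtain x where x: "0 \<le> x" "\<phi> x = l + 1"
    using phi_bij_inv_into[OF \<phi>, of "l + 1"] \<open>0 \<le> l\<close> by auto
  obtain N :: nat where N: "x \<le> real N" using real_arch_simple by blast
  have "ennreal l < ennreal (\<phi> (real n + 1))" if "N \<le> n" for n
  proof -
    have "real N \<le> real n" using that by simp
    then have "\<phi> x \<le> \<phi> (real n + 1)" using x(1) N by (simp add: phi_bij_le_iff[OF \<phi>])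
    then show ?thesis using x \<open>0 \<le> l\<close> by (simp add: ennreal_less_iff)
  qed
  then show "eventually (\<lambda>n. ennreal l < ennreal (\<phi> (real n + 1))) sequentially"
    by (rule eventually_sequentiallyI)
qed

definition concave_approx :: "(real \<Rightarrow> real) \<Rightarrow> real \<Rightarrow> nat \<Rightarrow> ennreal \<Rightarrow> ennreal" where
  "concave_approx \<phi> h N m =
    (\<Sum>k\<in>{1..N}. ennreal (grid_slope \<phi> h N k - grid_slope \<phi> h N (Suc k)) * min m (ennreal (real k * h)))"

lemma concave_approx_ennreal:
  assumes \<phi>: "phi_bij \<phi>" and conc: "concave_on {0..} \<phi>" and h: "0 < h" and x: "0 \<le> x"
  shows "concave_approx \<phi> h N (ennreal x) = ennreal (concave_interp \<phi> h N N x)"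
proof -
  have d: "0 \<le> grid_slope \<phi> h N k - grid_slope \<phi> h N (Suc k)" if "1 \<le> k" for k
    using grid_slope_antimono[OF conc phi_bij_mono_on[OF \<phi>] h that] by simp
  have "concave_approx \<phi> h N (ennreal x)
      = (\<Sum>k\<in>{1..N}. ennreal ((grid_slope \<phi> h N k - grid_slope \<phi> h N (Suc k)) * min x (real k * h)))"
    unfolding concave_approx_def using d x h
    by (intro sum.cong refl) (auto simp: min_ennreal ennreal_mult[symmetric] simp del: ennreal_mult)
  also have "\<dots> = ennreal (\<Sum>k\<in>{1..N}. (grid_slope \<phi> h N k - grid_slope \<phi> h N (Suc k)) * min x (real k * h))"
    using d x h by (intro sum_ennreal) auto
  also have "\<dots> = ennreal (concave_interp \<phi> h N N x)"
    by (simp only: concave_interp_eq_sum_min)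
  finally show ?thesis .
qed

lemma concave_approx_top:
  assumes \<phi>: "phi_bij \<phi>" and conc: "concave_on {0..} \<phi>" and h: "0 < h"
  shows "concave_approx \<phi> h N \<infinity> = ennreal (\<phi> (real N * h))"
proof -
  have "concave_approx \<phi> h N \<infinity> = concave_approx \<phi> h N (ennreal (real N * h))"
    unfolding concave_approx_def
  proof (intro sum.cong refl arg_cong2[where f="(*)"])
    fix k assume "k \<in> {1..N}"
    then have "ennreal (real k * h) \<le> ennreal (real N * h)" using h by (intro ennreal_leI mult_right_mono) auto
    then show "min \<infinity> (ennreal (real k * h)) = min (ennreal (real N * h)) (ennreal (real k * h))"
      by (simp add: min_absorb2)
  qed
  also have "\<dots> = ennreal (\<phi> (real N * h))"
    using concave_approx_ennreal[OF assms, of "real N * h" N]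
      concave_interp_props[OF conc phi_bij_mono_on[OF \<phi>] h, of N N] \<phi> h
    by (simp add: phi_bij_def grid_slope_def)
  finally show ?thesis .
qed

lemma concave_approx_le:
  assumes \<phi>: "phi_bij \<phi>" and conc: "concave_on {0..} \<phi>" and h: "0 < h"
  shows "concave_approx \<phi> h N m \<le> ext_phi \<phi> m"
proof (cases m)
  case (real x)
  then show ?thesis
    using concave_approx_ennreal[OF assms real(1)]
      concave_interp_le[OF conc phi_bij_mono_on[OF \<phi>] h _ real(1)] \<phi>
    by (simp add: ext_phi_def phi_bij_def ennreal_leI)
qed (simp add: ext_phi_def)

lemma mono_concave_approx: "mono (concave_approx \<phi> h N)"
  unfolding concave_approx_def by (intro monoI sum_mono mult_left_mono min.mono) auto

lemma concave_approx_tendsto: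
  assumes \<phi>: "phi_bij \<phi>" and conc: "concave_on {0..} \<phi>"
  shows "(\<lambda>n. concave_approx \<phi> (1 / (real n + 1)) (Suc n * Suc n) m) \<longlonglongrightarrow> ext_phi \<phi> m"
proof (cases m)
  case (real x)
  let ?I = "\<lambda>n. concave_interp \<phi> (1 / (real n + 1)) (Suc n * Suc n) (Suc n * Suc n) x"
  have grid: "real (Suc n * Suc n) * (1 / (real n + 1)) = real n + 1" for n
    by (simp add: field_simps)
  have "?I \<longlonglongrightarrow> \<phi> x"
  proof (rule phi_bij_grid_tendsto[OF \<phi> real(1), of 1])
    show "?I n \<le> \<phi> x" for n
      using concave_interp_le[OF conc phi_bij_mono_on[OF \<phi>] _ _ real(1)] \<phi> by (simp add: phi_bij_def)
    show "\<phi> (max (x - 1 / (real n + 1)) 0) \<le> ?I n" if "x \<le> real n + 1" for n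
    proof -
      have "real (Suc (Suc n * Suc n)) * (1 / (real n + 1)) = real (Suc n * Suc n) * (1 / (real n + 1)) + 1 / (real n + 1)"
        by (simp only: of_nat_Suc distrib_right mult_1)
      then have "x \<le> real (Suc (Suc n * Suc n)) * (1 / (real n + 1))"
        using that grid[of n] by (simp add: add_increasing2)
      then show ?thesis
        using concave_interp_props[OF conc phi_bij_mono_on[OF \<phi>], of "1 / (real n + 1)" "Suc n * Suc n" "Suc n * Suc n"]
          \<phi> real(1) by (simp add: phi_bij_def)
    qed
  qed simp
  then show ?thesis
    using real concave_approx_ennreal[OF \<phi> conc _ real(1)] by (simp add: ext_phi_def tendsto_ennrealI)
next
  case top
  have grid: "real (Suc n * Suc n) * (1 / (real n + 1)) = real n + 1" for n
    by (simp add: field_simps)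
  have "concave_approx \<phi> (1 / (real n + 1)) (Suc n * Suc n) \<infinity> = ennreal (\<phi> (real n + 1))" for n
    by (subst concave_approx_top[OF \<phi> conc]) (simp_all only: grid, simp)
  then show ?thesis
    using top phi_bij_tendsto_top[OF \<phi>] by (simp add: ext_phi_def)
qed

definition convex_approx :: "(real \<Rightarrow> real) \<Rightarrow> real \<Rightarrow> nat \<Rightarrow> ennreal \<Rightarrow> ennreal" where
  "convex_approx \<phi> h N m =
    (\<Sum>k\<in>{1..N}. ennreal (grid_slope \<phi> h N k - grid_slope \<phi> h N (k - 1)) * (m - ennreal (real k * h)))"

lemma convex_slope_increment_nonneg:
  assumes \<phi>: "phi_bij \<phi>" and conv: "convex_on {0..} \<phi>" and h: "0 < h" and k: "k \<in> {1..N}"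
  shows "0 \<le> grid_slope \<phi> h N k - grid_slope \<phi> h N (k - 1)"
proof (cases "k = 1")
  case False
  then have "1 \<le> k - 1" "Suc (k - 1) \<le> N" using k by auto
  from grid_slope_mono[OF conv h this] show ?thesis using k by simp
qed (use grid_slope_nonneg[OF phi_bij_mono_on[OF \<phi>] h] in simp)

lemma convex_approx_ennreal:
  assumes \<phi>: "phi_bij \<phi>" and conv: "convex_on {0..} \<phi>" and h: "0 < h" and x: "0 \<le> x"
  shows "convex_approx \<phi> h N (ennreal x) = ennreal (convex_interp \<phi> h N N x)"
proof -
  have "ennreal c * (ennreal x - ennreal (real k * h)) = ennreal (c * max (x - real k * h) 0)"
    if "0 \<le> c" for c k
    using that h by (simp add: ennreal_minus ennreal_mult[symmetric] max_def ennreal_neg del: ennreal_mult)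
  then have "convex_approx \<phi> h N (ennreal x)
      = (\<Sum>k\<in>{1..N}. ennreal ((grid_slope \<phi> h N k - grid_slope \<phi> h N (k - 1)) * max (x - real k * h) 0))"
    unfolding convex_approx_def by (intro sum.cong refl) (use convex_slope_increment_nonneg[OF \<phi> conv h] in blast)
  also have "\<dots> = ennreal (convex_interp \<phi> h N N x)"
    unfolding convex_interp_def
    by (rule sum_ennreal) (use convex_slope_increment_nonneg[OF \<phi> conv h] in \<open>auto intro!: mult_nonneg_nonneg\<close>)
  finally show ?thesis .
qed

lemma convex_approx_top:
  assumes \<phi>: "phi_bij \<phi>" and h: "0 < h" and N: "1 \<le> N"
  shows "convex_approx \<phi> h N \<infinity> = \<infinity>"
proof -
  have "0 < \<phi> h" using phi_bij_pos[OF \<phi> h] .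
  then have "0 < grid_slope \<phi> h N 1" using N h \<phi> by (simp add: grid_slope_def phi_bij_def)
  then have "ennreal (grid_slope \<phi> h N 1 - grid_slope \<phi> h N (1 - 1)) * (\<infinity> - ennreal (real 1 * h)) = \<infinity>"
    by (simp add: ennreal_mult_top)
  moreover have "ennreal (grid_slope \<phi> h N 1 - grid_slope \<phi> h N (1 - 1)) * (\<infinity> - ennreal (real 1 * h))
      \<le> convex_approx \<phi> h N \<infinity>"
    unfolding convex_approx_def using N
    by (intro member_le_sum[of 1 "{1..N}" "\<lambda>k. ennreal (grid_slope \<phi> h N k - grid_slope \<phi> h N (k - 1)) * (\<infinity> - ennreal (real k * h))"])
       auto
  ultimately show ?thesis by (simp add: top_unique)
qed

lemma convex_approx_le:
  assumes \<phi>: "phi_bij \<phi>" and conv: "convex_on {0..} \<phi>" and h: "0 < h"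
  shows "convex_approx \<phi> h N m \<le> ext_phi \<phi> m"
proof (cases m)
  case (real x)
  then show ?thesis
    using convex_approx_ennreal[OF assms real(1)]
      convex_interp_props[OF conv phi_bij_mono_on[OF \<phi>] h, of N N] real(1) \<phi>
    by (simp add: ext_phi_def phi_bij_def ennreal_leI)
qed (simp add: ext_phi_def)

lemma mono_convex_approx: "mono (convex_approx \<phi> h N)"
  unfolding convex_approx_def by (intro monoI sum_mono mult_left_mono ennreal_minus_mono) auto

lemma convex_approx_tendsto:
  assumes \<phi>: "phi_bij \<phi>" and conv: "convex_on {0..} \<phi>"
  shows "(\<lambda>n. convex_approx \<phi> (1 / (real n + 1)) (Suc n * Suc n) m) \<longlonglongrightarrow> ext_phi \<phi> m"
proof (cases m)
  case (real x)
  let ?I = "\<lambda>n. convex_interp \<phi> (1 / (real n + 1)) (Suc n * Suc n) (Suc n * Suc n) x"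
  have grid: "real (Suc n * Suc n) * (1 / (real n + 1)) = real n + 1" for n
    by (simp add: field_simps)
  have "?I \<longlonglongrightarrow> \<phi> x"
  proof (rule phi_bij_grid_tendsto[OF \<phi> real(1), of 2])
    show "?I n \<le> \<phi> x" for n
      using convex_interp_props[OF conv phi_bij_mono_on[OF \<phi>], of "1 / (real n + 1)" "Suc n * Suc n" "Suc n * Suc n"]
        \<phi> real(1) by (simp add: phi_bij_def)
    show "\<phi> (max (x - 2 / (real n + 1)) 0) \<le> ?I n" if "x \<le> real n + 1" for n
    proof -
      have "real (Suc (Suc n * Suc n)) * (1 / (real n + 1)) = real (Suc n * Suc n) * (1 / (real n + 1)) + 1 / (real n + 1)"
        by (simp only: of_nat_Suc distrib_right mult_1)
      then have "x \<le> real (Suc (Suc n * Suc n)) * (1 / (real n + 1))"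
        using that grid[of n] by (simp add: add_increasing2)
      then show ?thesis
        using convex_interp_props[OF conv phi_bij_mono_on[OF \<phi>], of "1 / (real n + 1)" "Suc n * Suc n" "Suc n * Suc n"]
          \<phi> real(1) by (simp add: phi_bij_def)
    qed
  qed simp
  then show ?thesis
    using real convex_approx_ennreal[OF \<phi> conv _ real(1)] by (simp add: ext_phi_def tendsto_ennrealI)
next
  case top
  then show ?thesis using convex_approx_top[OF \<phi>] by (simp add: ext_phi_def)
qed

lemma dist_modular_concave_subadditive:
  assumes \<psi>: "phi_bij \<psi>" and conc: "concave_on {0..} \<psi>"
    and u: "u \<in> borel_measurable halfline" and v: "v \<in> borel_measurable halfline"
  shows "dist_modular (ext_phi \<psi>) (\<lambda>y. u y + v y) \<le> dist_modular (ext_phi \<psi>) u + dist_modular (ext_phi \<psi>) v"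
proof -
  define A where "A n = concave_approx \<psi> (1 / (real n + 1)) (Suc n * Suc n)" for n
  have uv: "(\<lambda>y. u y + v y) \<in> borel_measurable halfline" using u v by simp
  have lim: "(\<lambda>n. dist_modular (A n) w) \<longlonglongrightarrow> dist_modular (ext_phi \<psi>) w"
    if "w \<in> borel_measurable halfline" for w
    unfolding A_def
    by (rule dist_modular_tendsto[OF that mono_concave_approx concave_approx_le[OF \<psi> conc]
          concave_approx_tendsto[OF \<psi> conc]]) simp
  have "dist_modular (A n) (\<lambda>y. u y + v y) \<le> dist_modular (A n) u + dist_modular (A n) v" for n
  proof -
    define h N where "h = 1 / (real n + 1)" and "N = Suc n * Suc n"
    define c where "c k = ennreal (grid_slope \<psi> h N k - grid_slope \<psi> h N (Suc k))" for k
    define g where "g k m = min m (ennreal (real k * h))" for k m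
    have A: "A n = (\<lambda>m. \<Sum>k\<in>{1..N}. c k * g k m)"
      by (simp add: A_def concave_approx_def fun_eq_iff h_def N_def c_def g_def)
    have mono: "mono (g k)" for k unfolding g_def by (intro monoI min.mono) auto
    have "dist_modular (A n) (\<lambda>y. u y + v y) = (\<Sum>k\<in>{1..N}. c k * dist_modular (g k) (\<lambda>y. u y + v y))"
      unfolding A by (rule dist_modular_sum_cmult[OF uv _ mono]) simp
    also have "\<dots> \<le> (\<Sum>k\<in>{1..N}. c k * (dist_modular (g k) u + dist_modular (g k) v))"
      unfolding g_def h_def by (intro sum_mono mult_left_mono dist_modular_min_subadditive[OF u v]) auto
    also have "\<dots> = dist_modular (A n) u + dist_modular (A n) v"
      unfolding A distrib_left sum.distrib
      by (simp add: dist_modular_sum_cmult[OF u _ mono] dist_modular_sum_cmult[OF v _ mono])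
    finally show ?thesis .
  qed
  then show ?thesis
    by (intro LIMSEQ_le[OF lim[OF uv] tendsto_add[OF lim[OF u] lim[OF v]]]) auto
qed

lemma dist_modular_convex_superadditive:
  assumes \<psi>: "phi_bij \<psi>" and conv: "convex_on {0..} \<psi>"
    and u: "u \<in> borel_measurable halfline" and v: "v \<in> borel_measurable halfline"
  shows "dist_modular (ext_phi \<psi>) u + dist_modular (ext_phi \<psi>) v \<le> dist_modular (ext_phi \<psi>) (\<lambda>y. u y + v y)"
proof -
  define A where "A n = convex_approx \<psi> (1 / (real n + 1)) (Suc n * Suc n)" for n
  have uv: "(\<lambda>y. u y + v y) \<in> borel_measurable halfline" using u v by simp
  have lim: "(\<lambda>n. dist_modular (A n) w) \<longlonglongrightarrow> dist_modular (ext_phi \<psi>) w"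
    if "w \<in> borel_measurable halfline" for w
    unfolding A_def
    by (rule dist_modular_tendsto[OF that mono_convex_approx convex_approx_le[OF \<psi> conv]
          convex_approx_tendsto[OF \<psi> conv]]) simp
  have "dist_modular (A n) u + dist_modular (A n) v \<le> dist_modular (A n) (\<lambda>y. u y + v y)" for n
  proof -
    define h N where "h = 1 / (real n + 1)" and "N = Suc n * Suc n"
    define c where "c k = ennreal (grid_slope \<psi> h N k - grid_slope \<psi> h N (k - 1))" for k
    define g where "g k m = m - ennreal (real k * h)" for k m
    have A: "A n = (\<lambda>m. \<Sum>k\<in>{1..N}. c k * g k m)"
      by (simp add: A_def convex_approx_def fun_eq_iff h_def N_def c_def g_def)
    have mono: "mono (g k)" for k unfolding g_def by (intro monoI ennreal_minus_mono) auto
    have "dist_modular (A n) u + dist_modular (A n) v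
        = (\<Sum>k\<in>{1..N}. c k * (dist_modular (g k) u + dist_modular (g k) v))"
      unfolding A distrib_left sum.distrib
      by (simp add: dist_modular_sum_cmult[OF u _ mono] dist_modular_sum_cmult[OF v _ mono])
    also have "\<dots> \<le> (\<Sum>k\<in>{1..N}. c k * dist_modular (g k) (\<lambda>y. u y + v y))"
      unfolding g_def h_def by (intro sum_mono mult_left_mono dist_modular_minus_superadditive[OF u v]) auto
    also have "\<dots> = dist_modular (A n) (\<lambda>y. u y + v y)"
      unfolding A by (rule dist_modular_sum_cmult[OF uv _ mono, symmetric]) simp
    finally show ?thesis .
  qed
  then show ?thesis
    by (intro LIMSEQ_le[OF tendsto_add[OF lim[OF u] lim[OF v]] lim[OF uv]]) auto
qed

lemma dist_modular_concave_sum_le: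
  assumes \<psi>: "phi_bij \<psi>" and conc: "concave_on {0..} \<psi>" and "finite I"
    and U: "\<And>i. i \<in> I \<Longrightarrow> U i \<in> borel_measurable halfline"
  shows "dist_modular (ext_phi \<psi>) (\<lambda>y. \<Sum>i\<in>I. U i y) \<le> (\<Sum>i\<in>I. dist_modular (ext_phi \<psi>) (U i))"
  using \<open>finite I\<close> U
proof (induction I rule: finite_induct)
  case empty
  then show ?case using \<psi> by (simp add: dist_modular_zero ext_phi_def phi_bij_def)
next
  case (insert i I)
  then have "dist_modular (ext_phi \<psi>) (\<lambda>y. \<Sum>j\<in>insert i I. U j y)
      \<le> dist_modular (ext_phi \<psi>) (U i) + dist_modular (ext_phi \<psi>) (\<lambda>y. \<Sum>j\<in>I. U j y)"
    by (simp add: dist_modular_concave_subadditive[OF \<psi> conc])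
  also have "\<dots> \<le> dist_modular (ext_phi \<psi>) (U i) + (\<Sum>j\<in>I. dist_modular (ext_phi \<psi>) (U j))"
    using insert by (intro add_left_mono) auto
  finally show ?case using insert by simp
qed

lemma dist_modular_convex_sum_ge:
  assumes \<psi>: "phi_bij \<psi>" and conv: "convex_on {0..} \<psi>" and "finite I"
    and U: "\<And>i. i \<in> I \<Longrightarrow> U i \<in> borel_measurable halfline"
  shows "(\<Sum>i\<in>I. dist_modular (ext_phi \<psi>) (U i)) \<le> dist_modular (ext_phi \<psi>) (\<lambda>y. \<Sum>i\<in>I. U i y)"
  using \<open>finite I\<close> U
proof (induction I rule: finite_induct)
  case (insert i I)
  then have "(\<Sum>j\<in>insert i I. dist_modular (ext_phi \<psi>) (U j))
      \<le> dist_modular (ext_phi \<psi>) (U i) + dist_modular (ext_phi \<psi>) (\<lambda>y. \<Sum>j\<in>I. U j y)"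
    by (simp add: add_left_mono)
  also have "\<dots> \<le> dist_modular (ext_phi \<psi>) (\<lambda>y. \<Sum>j\<in>insert i I. U j y)"
    using insert by (simp add: dist_modular_convex_superadditive[OF \<psi> conv])
  finally show ?case .
qed simp

section \<open>The Orlicz--Lorentz modular\<close>

lemma decr_rearr_antimono: "s \<le> s' \<Longrightarrow> decr_rearr f s' \<le> decr_rearr f s"
  unfolding decr_rearr_def
  by (intro Sup_subset_mono image_mono) (auto intro: order.trans[OF ennreal_leI])

lemma emeasure_halfline_abs_ge:
  "emeasure lebesgue {y. 0 \<le> y \<and> \<tau> \<le> \<bar>f y\<bar>} = emeasure halfline {y \<in> space halfline. \<tau> \<le> \<bar>f y\<bar>}"
  by (subst emeasure_halfline) (auto simp: space_halfline)

lemma distr_fun_abs: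
  "0 \<le> \<sigma> \<Longrightarrow> distr_fun (\<lambda>y. ennreal \<bar>f y\<bar>) \<sigma> = emeasure halfline {y \<in> space halfline. \<sigma> < \<bar>f y\<bar>}"
  by (simp add: distr_fun_def ennreal_less_iff)

lemma le_distr_fun_of_less_decr_rearr:
  assumes [measurable]: "f \<in> borel_measurable halfline" and \<sigma>: "0 \<le> \<sigma>"
    and less: "ennreal \<sigma> < decr_rearr f s"
  shows "ennreal s \<le> distr_fun (\<lambda>y. ennreal \<bar>f y\<bar>) \<sigma>"
proof -
  obtain \<tau> where \<tau>: "ennreal s \<le> emeasure lebesgue {y. 0 \<le> y \<and> \<tau> \<le> \<bar>f y\<bar>}" "ennreal \<sigma> < ennreal \<tau>"
    using less unfolding decr_rearr_def less_Sup_iff by blast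
  have "\<sigma> < \<tau>" using \<tau>(2) \<sigma> by (simp add: ennreal_less_iff)
  have "ennreal s \<le> emeasure halfline {y \<in> space halfline. \<tau> \<le> \<bar>f y\<bar>}"
    using \<tau>(1) by (simp add: emeasure_halfline_abs_ge)
  also have "\<dots> \<le> emeasure halfline {y \<in> space halfline. \<sigma> < \<bar>f y\<bar>}"
    by (rule emeasure_mono) (use \<open>\<sigma> < \<tau>\<close> in auto)
  finally show ?thesis using \<sigma> by (simp add: distr_fun_abs)
qed

lemma less_decr_rearr_of_less_distr_fun:
  assumes [measurable]: "f \<in> borel_measurable halfline" and s: "0 \<le> s" and \<sigma>: "0 \<le> \<sigma>"
    and less: "ennreal s < distr_fun (\<lambda>y. ennreal \<bar>f y\<bar>) \<sigma>"
  shows "ennreal \<sigma> < decr_rearr f s"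
proof -
  define A where "A n = {y \<in> space halfline. \<sigma> + 1 / Suc n \<le> \<bar>f y\<bar>}" for n :: nat
  have "incseq A"
  proof (rule incseq_SucI)
    fix n
    have "1 / real (Suc (Suc n)) \<le> 1 / real (Suc n)" by (intro divide_left_mono) auto
    then show "A n \<subseteq> A (Suc n)" unfolding A_def by auto
  qed
  moreover have "(\<Union>n. A n) = {y \<in> space halfline. \<sigma> < \<bar>f y\<bar>}"
  proof (intro equalityI subsetI)
    fix y assume y: "y \<in> {y \<in> space halfline. \<sigma> < \<bar>f y\<bar>}"
    then obtain n :: nat where "1 / (\<bar>f y\<bar> - \<sigma>) < real n" using reals_Archimedean2 by blast
    then have "1 / real (Suc n) \<le> \<bar>f y\<bar> - \<sigma>" using y by (simp add: field_simps)
    then have "y \<in> A n" using y unfolding A_def by simp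
    then show "y \<in> (\<Union>n. A n)" by blast
  qed (auto simp: A_def intro: less_le_trans[rotated])
  ultimately have "ennreal s < (SUP n. emeasure halfline (A n))"
    using less \<sigma> by (subst SUP_emeasure_incseq) (auto simp: A_def distr_fun_abs)
  then obtain n where n: "ennreal s < emeasure halfline (A n)" by (auto simp: less_SUP_iff)
  then have le: "ennreal (\<sigma> + 1 / Suc n) \<le> decr_rearr f s"
    using \<sigma> unfolding decr_rearr_def A_def
    by (intro Sup_upper imageI) (auto simp: emeasure_halfline_abs_ge)
  have "ennreal \<sigma> < ennreal (\<sigma> + 1 / Suc n)" using \<sigma> by (simp add: ennreal_less_iff)
  then show ?thesis using le by (rule less_le_trans)
qed

lemma less_ext_phi_divide_iff:
  assumes G: "phi_bij G" and c: "0 < c" and t: "0 \<le> t"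
  shows "ennreal t < ext_phi G (a / ennreal c) \<longleftrightarrow> ennreal (c * inv_into {0..} G t) < a"
proof (cases a)
  case (real r)
  define \<tau> where "\<tau> = inv_into {0..} G t"
  have \<tau>: "0 \<le> \<tau>" "G \<tau> = t" using phi_bij_inv_into[OF G t] by (auto simp: \<tau>_def)
  have "ext_phi G (a / ennreal c) = ennreal (G (r / c))"
    using real c by (simp add: divide_ennreal ext_phi_def)
  moreover have "t < G (r / c) \<longleftrightarrow> c * \<tau> < r"
    using phi_bij_less_iff[OF G \<tau>(1), of "r / c"] \<tau> real c by (simp add: field_simps)
  ultimately show ?thesis
    using real c \<tau> t phi_bij_nonneg[OF G, of "r / c"] by (simp add: ennreal_less_iff \<tau>_def[symmetric])
next
  case top
  then show ?thesis using c by (simp add: ext_phi_def ennreal_divide_eq_top_iff)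
qed

lemma emeasure_less_decr_rearr:
  assumes W: "phi_bij W" and \<psi>: "phi_bij \<psi>" and inv: "\<And>x. 0 \<le> x \<Longrightarrow> \<psi> (W x) = x"
    and [measurable]: "f \<in> borel_measurable halfline" and \<sigma>: "0 \<le> \<sigma>"
  shows "emeasure halfline {x \<in> space halfline. ennreal \<sigma> < decr_rearr f (W x)}
    = ext_phi \<psi> (distr_fun (\<lambda>y. ennreal \<bar>f y\<bar>) \<sigma>)"
proof -
  define S where "S = {x \<in> space halfline. ennreal \<sigma> < decr_rearr f (W x)}"
  define M where "M = distr_fun (\<lambda>y. ennreal \<bar>f y\<bar>) \<sigma>"
  have W_less: "W x < m \<longleftrightarrow> x < \<psi> m" and W_le: "W x \<le> m \<longleftrightarrow> x \<le> \<psi> m" if "0 \<le> x" "0 \<le> m" for x m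
    using phi_bij_less_iff[OF \<psi>] phi_bij_le_iff[OF \<psi>] phi_bij_nonneg[OF W] inv that by metis+
  have in_S: "x \<in> S \<longleftrightarrow> 0 \<le> x \<and> ennreal \<sigma> < decr_rearr f (W x)" for x
    by (simp add: S_def space_halfline)
  have upper: "ennreal (W x) \<le> M" if "x \<in> S" for x
    using le_distr_fun_of_less_decr_rearr[OF _ \<sigma>] that by (simp add: in_S M_def)
  have lower: "x \<in> S" if "0 \<le> x" "ennreal (W x) < M" for x
    using less_decr_rearr_of_less_distr_fun[OF _ phi_bij_nonneg[OF W] \<sigma>] that by (simp add: in_S M_def)
  have "is_interval S"
    unfolding is_interval_1
  proof (intro ballI allI impI)
    fix a b x assume "a \<in> S" "b \<in> S" "a \<le> x \<and> x \<le> b"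
    then have "0 \<le> x" "W x \<le> W b" using phi_bij_le_iff[OF W] by (auto simp: in_S)
    then have "decr_rearr f (W b) \<le> decr_rearr f (W x)" by (intro decr_rearr_antimono)
    then show "x \<in> S" using \<open>b \<in> S\<close> \<open>0 \<le> x\<close> by (auto simp: in_S intro: less_le_trans)
  qed
  then have S: "S \<in> sets halfline"
    by (intro sets_halfline_borel real_interval_borel_measurable) (auto simp: in_S)
  show ?thesis
  proof (cases M)
    case top
    then have "S = {0..}" using lower by (auto simp: in_S)
    then show ?thesis
      using top by (simp add: S_def M_def ext_phi_def emeasure_halfline emeasure_lborel_Ici)
  next
    case (real \<mu>)
    have "{0..<\<psi> \<mu>} \<subseteq> S"
      using lower W_less real phi_bij_nonneg[OF W] by (auto simp: ennreal_less_iff)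
    moreover have "S \<subseteq> {0..\<psi> \<mu>}"
      using upper W_le real by (auto simp: in_S ennreal_le_iff)
    ultimately have "emeasure halfline {0..<\<psi> \<mu>} \<le> emeasure halfline S" "emeasure halfline S \<le> emeasure halfline {0..\<psi> \<mu>}"
      using S by (auto intro!: emeasure_mono sets_halfline_borel)
    moreover have "emeasure halfline {0..<\<psi> \<mu>} = ennreal (\<psi> \<mu>)" "emeasure halfline {0..\<psi> \<mu>} = ennreal (\<psi> \<mu>)"
      using phi_bij_nonneg[OF \<psi> real(1)] by (simp_all add: emeasure_halfline subset_eq)
    ultimately show ?thesis
      using real by (simp add: S_def M_def ext_phi_def)
  qed
qed

text \<open>The Orlicz--Lorentz modular is a \<open>dist_modular\<close>: the level sets of
  \<open>x \<mapsto> G (f\<^sup>* (W x) / c)\<close> are initial intervals whose length is \<open>\<psi> = W\<inverse>\<close> applied to the distribution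
  function of \<open>G (\<bar>f\<bar> / c)\<close>.\<close>

lemma nn_integral_ext_phi_decr_rearr:
  assumes G: "phi_bij G" and W: "phi_bij W" and \<psi>: "phi_bij \<psi>" and inv: "\<And>x. 0 \<le> x \<Longrightarrow> \<psi> (W x) = x"
    and f[measurable]: "f \<in> borel_measurable halfline" and c: "0 < c"
  shows "(\<integral>\<^sup>+x\<in>{0..}. ext_phi G (decr_rearr f (W x) / ennreal c) \<partial>lebesgue)
    = dist_modular (ext_phi \<psi>) (\<lambda>y. ennreal (G (\<bar>f y\<bar> / c)))"
proof -
  define v where "v x = ext_phi G (decr_rearr f (W (max x 0)) / ennreal c)" for x
  have "antimono v"
  proof (rule antimonoI)
    fix x x' :: real assume "x \<le> x'"
    then have "W (max x 0) \<le> W (max x' 0)" by (simp add: phi_bij_le_iff[OF W])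
    then have "decr_rearr f (W (max x' 0)) / ennreal c \<le> decr_rearr f (W (max x 0)) / ennreal c"
      by (intro divide_right_mono_ennreal decr_rearr_antimono)
    then show "v x' \<le> v x"
      unfolding v_def by (rule mono_ext_phi[OF phi_bij_mono_on[OF G], THEN monoD])
  qed
  then have [measurable]: "v \<in> borel_measurable halfline"
    by (intro borel_measurable_halfline borel_measurable_antimono)
  have level: "distr_fun v t = ext_phi \<psi> (distr_fun (\<lambda>y. ennreal (G (\<bar>f y\<bar> / c))) t)" if t: "0 \<le> t" for t
  proof -
    define \<sigma> where "\<sigma> = c * inv_into {0..} G t"
    have \<sigma>: "0 \<le> \<sigma>" using phi_bij_inv_into(1)[OF G t] c by (simp add: \<sigma>_def)
    have "distr_fun v t = emeasure halfline {x \<in> space halfline. ennreal \<sigma> < decr_rearr f (W x)}"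
      unfolding distr_fun_def v_def \<sigma>_def
      by (intro arg_cong[where f="emeasure halfline"] Collect_cong)
         (auto simp: less_ext_phi_divide_iff[OF G c t] space_halfline max_def)
    also have "\<dots> = ext_phi \<psi> (distr_fun (\<lambda>y. ennreal \<bar>f y\<bar>) \<sigma>)"
      by (rule emeasure_less_decr_rearr[OF W \<psi> inv f \<sigma>])
    also have "distr_fun (\<lambda>y. ennreal \<bar>f y\<bar>) \<sigma> = distr_fun (\<lambda>y. ennreal (G (\<bar>f y\<bar> / c))) t"
      using less_ext_phi_divide_iff[OF G c t, of "ennreal \<bar>f _\<bar>"] \<sigma> c
      by (simp add: distr_fun_def \<sigma>_def divide_ennreal ext_phi_def ennreal_less_iff)
    finally show ?thesis .
  qed
  have "(\<integral>\<^sup>+x\<in>{0..}. ext_phi G (decr_rearr f (W x) / ennreal c) \<partial>lebesgue) = (\<integral>\<^sup>+x. v x \<partial>halfline)"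
    unfolding halfline_def by (subst nn_integral_restrict_space) (auto simp: v_def indicator_def intro!: nn_integral_cong)
  also have "\<dots> = (\<integral>\<^sup>+t. distr_fun v t * indicator {0..} t \<partial>lborel)"
    by (rule nn_integral_halfline_distr_fun) simp
  also have "\<dots> = dist_modular (ext_phi \<psi>) (\<lambda>y. ennreal (G (\<bar>f y\<bar> / c)))"
    unfolding dist_modular_def by (intro nn_integral_cong) (simp add: level indicator_def)
  finally show ?thesis .
qed

section \<open>Luxemburg functionals of homogeneous modulars\<close>

definition luxemburg_modular :: "((real \<Rightarrow> ennreal) \<Rightarrow> ennreal) \<Rightarrow> (real \<Rightarrow> real) \<Rightarrow> (real \<Rightarrow> real) \<Rightarrow> ennreal" where
  "luxemburg_modular \<rho> G f = Inf (ennreal ` {c. 0 < c \<and> \<rho> (\<lambda>y. ennreal (G (\<bar>f y\<bar> / c))) \<le> 1})"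

lemma luxemburg_modular_le: "0 < c \<Longrightarrow> \<rho> (\<lambda>y. ennreal (G (\<bar>f y\<bar> / c))) \<le> 1 \<Longrightarrow> luxemburg_modular \<rho> G f \<le> ennreal c"
  unfolding luxemburg_modular_def by (rule Inf_lower) auto

lemma one_less_modular_of_less_luxemburg:
  "0 < c \<Longrightarrow> ennreal c < luxemburg_modular \<rho> G f \<Longrightarrow> 1 < \<rho> (\<lambda>y. ennreal (G (\<bar>f y\<bar> / c)))"
  using luxemburg_modular_le[of c \<rho> G f] by (auto simp: not_le[symmetric])

lemma luxemburg_modular_zero:
  assumes "\<rho> (\<lambda>y. 0) \<le> 1" "G 0 = 0"
  shows "luxemburg_modular \<rho> G (\<lambda>x. 0) = 0"
proof -
  have "luxemburg_modular \<rho> G (\<lambda>x. 0) \<le> 0 + ennreal e" if "0 < e" for e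
    using luxemburg_modular_le[OF that, of \<rho> G "\<lambda>x. 0"] assms by simp
  then show ?thesis by (metis ennreal_le_epsilon le_zero_eq)
qed

lemma borel_measurable_powr_sum:
  fixes f :: "nat \<Rightarrow> real \<Rightarrow> real"
  assumes "\<And>i. i < n \<Longrightarrow> f i \<in> borel_measurable halfline"
  shows "(\<lambda>x. (\<Sum>i<n. \<bar>f i x\<bar> powr p) powr (1 / p)) \<in> borel_measurable halfline"
proof -
  have "(\<lambda>x. \<bar>f i x\<bar> powr p) \<in> borel_measurable halfline" if "i \<in> {..<n}" for i
  proof -
    have [measurable]: "f i \<in> borel_measurable halfline" using assms that by simp
    show ?thesis by measurable
  qed
  then show ?thesis by measurable
qed

lemma one_less_convex_comb_ennreal:
  fixes X :: "'a \<Rightarrow> ennreal"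
  assumes "finite I" and w: "\<And>i. i \<in> I \<Longrightarrow> 0 \<le> w i" "(\<Sum>i\<in>I. w i) = 1" and X: "\<And>i. i \<in> I \<Longrightarrow> 1 < X i"
  shows "1 < (\<Sum>i\<in>I. ennreal (w i) * X i)"
proof -
  have "I \<noteq> {}" using w(2) by auto
  define m where "m = Min (X ` I)"
  have "m \<in> X ` I" unfolding m_def using \<open>finite I\<close> \<open>I \<noteq> {}\<close> by (intro Min_in) auto
  then have "1 < m" using X by auto
  also have "m = (\<Sum>i\<in>I. ennreal (w i)) * m"
    using w by (simp add: sum_ennreal)
  also have "\<dots> \<le> (\<Sum>i\<in>I. ennreal (w i) * X i)"
    unfolding sum_distrib_right m_def using \<open>finite I\<close> by (intro sum_mono mult_left_mono Min_le) auto
  finally show ?thesis .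
qed

locale homogeneous_modular =
  fixes \<rho> :: "(real \<Rightarrow> ennreal) \<Rightarrow> ennreal"
  assumes modular_mono: "v \<in> borel_measurable halfline \<Longrightarrow> (\<And>y. 0 \<le> y \<Longrightarrow> u y \<le> v y) \<Longrightarrow> \<rho> u \<le> \<rho> v"
    and modular_cmult: "u \<in> borel_measurable halfline \<Longrightarrow> 0 < c \<Longrightarrow> \<rho> (\<lambda>y. ennreal c * u y) = ennreal c * \<rho> u"
begin

lemma modular_le_one_of_luxemburg_less:
  assumes G: "phi_bij G" and [measurable]: "f \<in> borel_measurable halfline"
    and c: "0 < c" and less: "luxemburg_modular \<rho> G f < ennreal c"
  shows "\<rho> (\<lambda>y. ennreal (G (\<bar>f y\<bar> / c))) \<le> 1"
proof -
  obtain c' where c': "0 < c'" "\<rho> (\<lambda>y. ennreal (G (\<bar>f y\<bar> / c'))) \<le> 1" "ennreal c' < ennreal c"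
    using less unfolding luxemburg_modular_def Inf_less_iff by auto
  then have "c' < c" by (simp add: ennreal_less_iff)
  have "\<rho> (\<lambda>y. ennreal (G (\<bar>f y\<bar> / c))) \<le> \<rho> (\<lambda>y. ennreal (G (\<bar>f y\<bar> / c')))"
  proof (rule modular_mono)
    show "(\<lambda>y. ennreal (G (\<bar>f y\<bar> / c'))) \<in> borel_measurable halfline"
      using c' by (intro borel_measurable_phi_bij_comp[OF G]) auto
    show "ennreal (G (\<bar>f y\<bar> / c)) \<le> ennreal (G (\<bar>f y\<bar> / c'))" for y
      using c' \<open>c' < c\<close> by (intro ennreal_leI) (simp add: phi_bij_le_iff[OF G] frac_le)
  qed
  then show ?thesis using c' by simp
qed

lemma le_luxemburg_modular_of_one_less:
  assumes G: "phi_bij G" and g: "g \<in> borel_measurable halfline"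
    and gt: "\<And>c. 0 < c \<Longrightarrow> c < T \<Longrightarrow> 1 < \<rho> (\<lambda>y. ennreal (G (\<bar>g y\<bar> / c)))"
  shows "ennreal T \<le> luxemburg_modular \<rho> G g"
proof (rule ccontr)
  assume "\<not> ?thesis"
  then obtain z where z: "luxemburg_modular \<rho> G g < z" "z < ennreal T"
    using dense by (force simp: not_le)
  obtain c where zc: "z = ennreal c" "0 \<le> c" using z(2) by (cases z) (auto simp: top_unique)
  have c: "0 < c" "c < T"
    using z zc by (auto simp: ennreal_less_iff not_less[symmetric] ennreal_neg intro: ccontr)
  have "\<rho> (\<lambda>y. ennreal (G (\<bar>g y\<bar> / c))) \<le> 1"
    using z zc c by (intro modular_le_one_of_luxemburg_less[OF G g]) auto
  then show False using gt[OF c] by simp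
qed

lemma modular_partial_powr_sum_le:
  fixes f :: "nat \<Rightarrow> real \<Rightarrow> real" and I :: "nat set"
  assumes G: "phi_bij G" and H: "phi_bij H" and q: "0 < q" and c\<^sub>0: "0 < c\<^sub>0" and c: "0 < c"
    and upper: "\<And>t. 0 \<le> t \<Longrightarrow> H t \<le> G ((c\<^sub>0 * t) powr (1 / q))"
    and I: "I \<subseteq> {..<n}" and f: "\<And>i. i < n \<Longrightarrow> f i \<in> borel_measurable halfline"
  shows "\<rho> (\<lambda>y. ennreal (H (\<Sum>i\<in>I. \<bar>f i y\<bar> powr q / (c powr q * c\<^sub>0))))
    \<le> \<rho> (\<lambda>y. ennreal (G (\<bar>(\<Sum>i<n. \<bar>f i y\<bar> powr q) powr (1 / q)\<bar> / c)))"
proof (rule modular_mono)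
  show "(\<lambda>y. ennreal (G (\<bar>(\<Sum>i<n. \<bar>f i y\<bar> powr q) powr (1 / q)\<bar> / c))) \<in> borel_measurable halfline"
    using c f by (intro borel_measurable_phi_bij_comp[OF G] borel_measurable_divide
        borel_measurable_abs borel_measurable_powr_sum) auto
  fix y
  define t where "t = (\<Sum>i<n. \<bar>f i y\<bar> powr q) / (c powr q * c\<^sub>0)"
  have "(\<Sum>i\<in>I. \<bar>f i y\<bar> powr q / (c powr q * c\<^sub>0)) \<le> t"
    unfolding t_def sum_divide_distrib using I c c\<^sub>0 by (intro sum_mono2) auto
  moreover have "0 \<le> (\<Sum>i\<in>I. \<bar>f i y\<bar> powr q / (c powr q * c\<^sub>0))"
    using c c\<^sub>0 by (intro sum_nonneg divide_nonneg_pos) auto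
  ultimately have "H (\<Sum>i\<in>I. \<bar>f i y\<bar> powr q / (c powr q * c\<^sub>0)) \<le> H t"
    by (intro mono_onD[OF phi_bij_mono_on[OF H]]) auto
  also have "\<dots> \<le> G ((c\<^sub>0 * t) powr (1 / q))"
    using upper[of t] c c\<^sub>0 by (simp add: t_def sum_nonneg)
  also have "(c\<^sub>0 * t) powr (1 / q) = \<bar>(\<Sum>i<n. \<bar>f i y\<bar> powr q) powr (1 / q)\<bar> / c"
    using c c\<^sub>0 q by (simp add: t_def powr_divide powr_powr sum_nonneg)
  finally show "ennreal (H (\<Sum>i\<in>I. \<bar>f i y\<bar> powr q / (c powr q * c\<^sub>0)))
      \<le> ennreal (G (\<bar>(\<Sum>i<n. \<bar>f i y\<bar> powr q) powr (1 / q)\<bar> / c))"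
    by (rule ennreal_leI)
qed

lemma modular_scaled_le_one:
  assumes G: "phi_bij G" and H: "phi_bij H" and p: "0 < p" and c\<^sub>0: "0 < c\<^sub>0"
    and upper: "\<And>t. 0 \<le> t \<Longrightarrow> H t \<le> G ((c\<^sub>0 * t) powr (1 / p))"
    and f: "f \<in> borel_measurable halfline" and b: "0 < b" and less: "luxemburg_modular \<rho> G f < ennreal b"
  shows "\<rho> (\<lambda>y. ennreal (H ((\<bar>f y\<bar> / b) powr p / c\<^sub>0))) \<le> 1"
proof -
  have "\<rho> (\<lambda>y. ennreal (H ((\<bar>f y\<bar> / b) powr p / c\<^sub>0))) \<le> \<rho> (\<lambda>y. ennreal (G (\<bar>f y\<bar> / b)))"
  proof (rule modular_mono)
    show "(\<lambda>y. ennreal (G (\<bar>f y\<bar> / b))) \<in> borel_measurable halfline"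
      using f b by (intro borel_measurable_phi_bij_comp[OF G]) auto
    show "ennreal (H ((\<bar>f y\<bar> / b) powr p / c\<^sub>0)) \<le> ennreal (G (\<bar>f y\<bar> / b))" for y
      using upper[of "(\<bar>f y\<bar> / b) powr p / c\<^sub>0"] c\<^sub>0 p b by (intro ennreal_leI) (simp add: powr_powr)
  qed
  also have "\<dots> \<le> 1" by (rule modular_le_one_of_luxemburg_less[OF G f b less])
  finally show ?thesis .
qed

lemma one_less_modular_scaled:
  assumes G: "phi_bij G" and H: "phi_bij H" and q: "0 < q" and c\<^sub>0: "0 < c\<^sub>0"
    and lower: "\<And>t. 0 \<le> t \<Longrightarrow> G ((t / c\<^sub>0) powr (1 / q)) \<le> H t"
    and f: "f \<in> borel_measurable halfline" and \<beta>: "0 < \<beta>" and greater: "ennreal \<beta> < luxemburg_modular \<rho> G f"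
  shows "1 < \<rho> (\<lambda>y. ennreal (H (c\<^sub>0 * (\<bar>f y\<bar> / \<beta>) powr q)))"
proof -
  have "1 < \<rho> (\<lambda>y. ennreal (G (\<bar>f y\<bar> / \<beta>)))"
    by (rule one_less_modular_of_less_luxemburg[OF \<beta> greater])
  also have "\<dots> \<le> \<rho> (\<lambda>y. ennreal (H (c\<^sub>0 * (\<bar>f y\<bar> / \<beta>) powr q)))"
  proof (rule modular_mono)
    show "(\<lambda>y. ennreal (H (c\<^sub>0 * (\<bar>f y\<bar> / \<beta>) powr q))) \<in> borel_measurable halfline"
      using f c\<^sub>0 by (intro borel_measurable_phi_bij_comp[OF H]) auto
    show "ennreal (G (\<bar>f y\<bar> / \<beta>)) \<le> ennreal (H (c\<^sub>0 * (\<bar>f y\<bar> / \<beta>) powr q))" for y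
      using lower[of "c\<^sub>0 * (\<bar>f y\<bar> / \<beta>) powr q"] c\<^sub>0 q \<beta> by (intro ennreal_leI) (simp add: powr_powr)
  qed
  finally show ?thesis .
qed

end

text \<open>The index sets are fixed to \<open>nat set\<close>: locale assumptions cannot be polymorphic in a new type.\<close>

locale subadditive_modular = homogeneous_modular +
  assumes modular_sum_le: "finite (I :: nat set) \<Longrightarrow> (\<And>i. i \<in> I \<Longrightarrow> U i \<in> borel_measurable halfline)
    \<Longrightarrow> \<rho> (\<lambda>y. \<Sum>i\<in>I. U i y) \<le> (\<Sum>i\<in>I. \<rho> (U i))"
begin

lemma modular_convex_comb_le:
  fixes I :: "nat set"
  assumes H: "phi_bij H" "convex_on {0..} H" and "finite I"
    and w: "\<And>i. i \<in> I \<Longrightarrow> 0 \<le> w i" "(\<Sum>i\<in>I. w i) = 1"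
    and h: "\<And>i. i \<in> I \<Longrightarrow> h i \<in> borel_measurable halfline" "\<And>i y. 0 \<le> h i y"
  shows "\<rho> (\<lambda>y. ennreal (H (\<Sum>i\<in>I. w i * h i y))) \<le> (\<Sum>i\<in>I. ennreal (w i) * \<rho> (\<lambda>y. ennreal (H (h i y))))"
proof -
  have Hh: "(\<lambda>y. ennreal (H (h i y))) \<in> borel_measurable halfline" if "i \<in> I" for i
    using h that by (intro borel_measurable_phi_bij_comp[OF H(1)])
  have "\<rho> (\<lambda>y. ennreal (H (\<Sum>i\<in>I. w i * h i y))) \<le> \<rho> (\<lambda>y. \<Sum>i\<in>I. ennreal (w i) * ennreal (H (h i y)))"
  proof (rule modular_mono)
    show "(\<lambda>y. \<Sum>i\<in>I. ennreal (w i) * ennreal (H (h i y))) \<in> borel_measurable halfline"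
      using Hh by measurable
    fix y
    have "H (\<Sum>i\<in>I. w i * h i y) \<le> (\<Sum>i\<in>I. w i * H (h i y))"
      using convex_on_sum[OF \<open>finite I\<close> _ H(2), of w "\<lambda>i. h i y"] w h by (cases "I = {}") auto
    then have "ennreal (H (\<Sum>i\<in>I. w i * h i y)) \<le> ennreal (\<Sum>i\<in>I. w i * H (h i y))"
      by (rule ennreal_leI)
    also have "\<dots> = (\<Sum>i\<in>I. ennreal (w i * H (h i y)))"
      using w(1) h(2) phi_bij_nonneg[OF H(1)] by (intro sum_ennreal[symmetric]) simp
    also have "\<dots> = (\<Sum>i\<in>I. ennreal (w i) * ennreal (H (h i y)))"
      using w(1) h(2) phi_bij_nonneg[OF H(1)] by (intro sum.cong refl ennreal_mult) auto
    finally show "ennreal (H (\<Sum>i\<in>I. w i * h i y)) \<le> (\<Sum>i\<in>I. ennreal (w i) * ennreal (H (h i y)))" .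
  qed
  also have "\<dots> \<le> (\<Sum>i\<in>I. \<rho> (\<lambda>y. ennreal (w i) * ennreal (H (h i y))))"
    using Hh by (intro modular_sum_le[OF \<open>finite I\<close>] borel_measurable_times_ennreal) simp_all
  also have "\<dots> \<le> (\<Sum>i\<in>I. ennreal (w i) * \<rho> (\<lambda>y. ennreal (H (h i y))))"
  proof (intro sum_mono)
    fix i assume "i \<in> I"
    show "\<rho> (\<lambda>y. ennreal (w i) * ennreal (H (h i y))) \<le> ennreal (w i) * \<rho> (\<lambda>y. ennreal (H (h i y)))"
    proof (cases "w i = 0")
      case True
      then show ?thesis using modular_sum_le[of "{}"] by simp
    qed (use w(1)[OF \<open>i \<in> I\<close>] modular_cmult[OF Hh[OF \<open>i \<in> I\<close>]] in simp)
  qed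
  finally show ?thesis .
qed

text \<open>Splitting \<open>\<bar>f\<^sub>i\<bar>\<^sup>p\<close> with the weights \<open>b\<^sub>i\<^sup>p / \<Sum> b\<^sub>j\<^sup>p\<close> turns \<open>G (\<bar>g\<bar> / c)\<close> into \<open>H\<close> of a convex
  combination, to which Jensen's inequality and subadditivity of \<open>\<rho>\<close> apply.\<close>

lemma luxemburg_powr_sum_le:
  fixes f :: "nat \<Rightarrow> real \<Rightarrow> real" and b :: "nat \<Rightarrow> real"
  assumes G: "phi_bij G" and p: "0 < p" and H: "phi_bij H" "convex_on {0..} H" and c\<^sub>0: "0 < c\<^sub>0"
    and equiv: "\<And>t. 0 \<le> t \<Longrightarrow> G ((t / c\<^sub>0) powr (1 / p)) \<le> H t \<and> H t \<le> G ((c\<^sub>0 * t) powr (1 / p))"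
    and n: "0 < n" and f: "\<And>i. i < n \<Longrightarrow> f i \<in> borel_measurable halfline"
    and b: "\<And>i. i < n \<Longrightarrow> 0 < b i" and less: "\<And>i. i < n \<Longrightarrow> luxemburg_modular \<rho> G (f i) < ennreal (b i)"
  shows "luxemburg_modular \<rho> G (\<lambda>x. (\<Sum>i<n. \<bar>f i x\<bar> powr p) powr (1 / p))
    \<le> ennreal (c\<^sub>0 powr (2 / p) * (\<Sum>i<n. b i powr p) powr (1 / p))"
proof -
  define A where "A = (\<Sum>i<n. b i powr p)"
  define w where "w i = b i powr p / A" for i
  define h where "h i y = (\<bar>f i y\<bar> / b i) powr p / c\<^sub>0" for i y
  define c where "c = c\<^sub>0 powr (2 / p) * A powr (1 / p)"
  have "0 < b i powr p" if "i < n" for i using b[OF that] by simp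
  then have A: "0 < A" unfolding A_def using n by (intro sum_pos) auto
  have c: "0 < c" using c\<^sub>0 A by (simp add: c_def)
  have w: "\<And>i. i \<in> {..<n} \<Longrightarrow> 0 \<le> w i" "(\<Sum>i<n. w i) = 1"
    using A by (simp_all add: w_def A_def sum_divide_distrib[symmetric])
  have "h i \<in> borel_measurable halfline" if "i \<in> {..<n}" for i
  proof -
    have [measurable]: "f i \<in> borel_measurable halfline" using f that by simp
    show ?thesis unfolding h_def by measurable
  qed
  moreover have "0 \<le> h i y" for i y using c\<^sub>0 by (simp add: h_def)
  ultimately have h: "\<And>i. i \<in> {..<n} \<Longrightarrow> h i \<in> borel_measurable halfline" "\<And>i y. 0 \<le> h i y"
    by blast+
  have comb: "(\<Sum>i<n. w i * h i y) = (\<Sum>i<n. \<bar>f i y\<bar> powr p) / (A * c\<^sub>0)" for y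
    unfolding sum_divide_distrib
  proof (intro sum.cong refl)
    fix i assume "i \<in> {..<n}"
    then have "0 < b i" by (simp add: b)
    then show "w i * h i y = \<bar>f i y\<bar> powr p / (A * c\<^sub>0)"
      using A c\<^sub>0 by (simp add: w_def h_def powr_divide field_simps)
  qed
  have comb_nonneg: "0 \<le> (\<Sum>i<n. w i * h i y)" for y
    using w h by (intro sum_nonneg mult_nonneg_nonneg) auto
  have "G (\<bar>(\<Sum>i<n. \<bar>f i y\<bar> powr p) powr (1 / p)\<bar> / c) \<le> H (\<Sum>i<n. w i * h i y)" for y
  proof -
    have "((\<Sum>i<n. w i * h i y) / c\<^sub>0) powr (1 / p) = (\<Sum>i<n. \<bar>f i y\<bar> powr p) powr (1 / p) / c"
      using A c\<^sub>0 p
      by (simp add: comb c_def powr_divide powr_mult sum_nonneg powr_powr powr_add[symmetric]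
          flip: powr_numeral)
    then show ?thesis using equiv[OF comb_nonneg[of y]] by simp
  qed
  then have "\<rho> (\<lambda>y. ennreal (G (\<bar>(\<Sum>i<n. \<bar>f i y\<bar> powr p) powr (1 / p)\<bar> / c)))
      \<le> \<rho> (\<lambda>y. ennreal (H (\<Sum>i<n. w i * h i y)))"
    using h comb_nonneg by (intro modular_mono ennreal_leI borel_measurable_phi_bij_comp[OF H(1)]) auto
  also have "\<dots> \<le> (\<Sum>i<n. ennreal (w i) * \<rho> (\<lambda>y. ennreal (H (h i y))))"
    by (rule modular_convex_comb_le[OF H _ w h]) simp
  also have "\<dots> \<le> (\<Sum>i<n. ennreal (w i) * 1)"
    unfolding h_def using equiv f b less
    by (intro sum_mono mult_left_mono modular_scaled_le_one[OF G H(1) p c\<^sub>0]) auto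
  also have "\<dots> = ennreal (\<Sum>i<n. w i)"
    by simp (rule sum_ennreal, use w in simp)
  also have "\<dots> = 1"
    using w by simp
  finally show ?thesis
    using luxemburg_modular_le[OF c] by (simp add: c_def A_def)
qed

lemma p_convex_luxemburg_modular:
  assumes G: "phi_bij G" and p: "0 < p" and H: "phi_bij H" "convex_on {0..} H"
    and equiv: "phi_equiv (G \<circ> (\<lambda>t. t powr (1 / p))) H"
    and X: "\<And>f. f \<in> X \<Longrightarrow> f \<in> borel_measurable halfline \<and> N f < \<infinity>"
    and N: "\<And>f. f \<in> borel_measurable halfline \<Longrightarrow> N f = luxemburg_modular \<rho> G f"
  shows "p_convex X N p"
proof -
  obtain c\<^sub>0 where c\<^sub>0: "0 < c\<^sub>0"
    and eq: "\<And>t. 0 \<le> t \<Longrightarrow> G ((t / c\<^sub>0) powr (1 / p)) \<le> H t \<and> H t \<le> G ((c\<^sub>0 * t) powr (1 / p))"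
    using equiv unfolding phi_equiv_def by auto
  define C where "C = c\<^sub>0 powr (2 / p)"
  show ?thesis unfolding p_convex_def
  proof (intro exI[of _ C] conjI allI impI)
    show "0 < C" using c\<^sub>0 by (simp add: C_def)
    fix n :: nat and f :: "nat \<Rightarrow> real \<Rightarrow> real"
    assume "\<forall>i<n. f i \<in> X"
    then have f: "\<And>i. i < n \<Longrightarrow> f i \<in> borel_measurable halfline" and fin: "\<And>i. i < n \<Longrightarrow> N (f i) < \<infinity>"
      using X by auto
    define a where "a i = enn2real (N (f i))" for i
    have Na: "N (f i) = ennreal (a i)" if "i < n" for i
      using fin[OF that] by (simp add: a_def less_top)
    define g where "g x = (\<Sum>i<n. \<bar>f i x\<bar> powr p) powr (1 / p)" for x
    have g: "g \<in> borel_measurable halfline" unfolding g_def by (rule borel_measurable_powr_sum[OF f])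
    have "N g \<le> ennreal (C * (\<Sum>i<n. a i powr p) powr (1 / p))"
    proof (cases "n = 0")
      case True
      then have "g = (\<lambda>x. 0)" by (simp add: g_def fun_eq_iff)
      then show ?thesis
        using N[OF g] luxemburg_modular_zero[of \<rho> G] modular_sum_le[of "{}"] G by (simp add: phi_bij_def)
    next
      case False
      define r where "r k = C * (\<Sum>i<n. (a i + 1 / Suc k) powr p) powr (1 / p)" for k
      have "N g \<le> ennreal (r k)" for k
        unfolding N[OF g] r_def C_def g_def
      proof (rule luxemburg_powr_sum_le[OF G p H c\<^sub>0 eq])
        fix i assume i: "i < n"
        show "0 < a i + 1 / Suc k" by (simp add: a_def add_nonneg_pos)
        have "ennreal (a i) < ennreal (a i + 1 / Suc k)"
          by (rule ennreal_lessI) (auto simp: a_def add_nonneg_pos)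
        then show "luxemburg_modular \<rho> G (f i) < ennreal (a i + 1 / Suc k)"
          using Na[OF i] N[OF f[OF i]] by simp
      qed (use False f in auto)
      moreover have "r \<longlonglongrightarrow> C * (\<Sum>i<n. a i powr p) powr (1 / p)"
        unfolding r_def
      proof (intro tendsto_intros tendsto_powr')
        show "(\<lambda>k. a i + 1 / real (Suc k)) \<longlonglongrightarrow> a i" for i
          using tendsto_add[OF tendsto_const LIMSEQ_Suc[OF lim_const_over_n[of 1]], of "a i"] by simp
      qed (use p in \<open>auto simp: a_def intro!: always_eventually sum_nonneg\<close>)
      ultimately show ?thesis
        by (intro LIMSEQ_le_const[OF tendsto_ennrealI]) auto
    qed
    then show "N g \<le> ennreal (C * (\<Sum>i<n. enn2real (N (f i)) powr p) powr (1 / p))"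
      by (simp add: a_def)
  qed
qed

end


locale superadditive_modular = homogeneous_modular +
  assumes modular_sum_ge: "finite (I :: nat set) \<Longrightarrow> (\<And>i. i \<in> I \<Longrightarrow> U i \<in> borel_measurable halfline)
    \<Longrightarrow> (\<Sum>i\<in>I. \<rho> (U i)) \<le> \<rho> (\<lambda>y. \<Sum>i\<in>I. U i y)"
begin

lemma modular_concave_comb_ge:
  fixes I :: "nat set"
  assumes H: "phi_bij H" "concave_on {0..} H" and "finite I"
    and w: "\<And>i. i \<in> I \<Longrightarrow> 0 \<le> w i" "(\<Sum>i\<in>I. w i) = 1"
    and h: "\<And>i. i \<in> I \<Longrightarrow> h i \<in> borel_measurable halfline" "\<And>i y. 0 \<le> h i y"
  shows "(\<Sum>i\<in>I. ennreal (w i) * \<rho> (\<lambda>y. ennreal (H (h i y)))) \<le> \<rho> (\<lambda>y. ennreal (H (\<Sum>i\<in>I. w i * h i y)))"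
proof -
  have Hh: "(\<lambda>y. ennreal (H (h i y))) \<in> borel_measurable halfline" if "i \<in> I" for i
    using h that by (intro borel_measurable_phi_bij_comp[OF H(1)])
  have "(\<Sum>i\<in>I. ennreal (w i) * \<rho> (\<lambda>y. ennreal (H (h i y))))
      \<le> (\<Sum>i\<in>I. \<rho> (\<lambda>y. ennreal (w i) * ennreal (H (h i y))))"
  proof (intro sum_mono)
    fix i assume "i \<in> I"
    show "ennreal (w i) * \<rho> (\<lambda>y. ennreal (H (h i y))) \<le> \<rho> (\<lambda>y. ennreal (w i) * ennreal (H (h i y)))"
      using w(1)[OF \<open>i \<in> I\<close>] modular_cmult[OF Hh[OF \<open>i \<in> I\<close>]] by (cases "w i = 0") auto
  qed
  also have "\<dots> \<le> \<rho> (\<lambda>y. \<Sum>i\<in>I. ennreal (w i) * ennreal (H (h i y)))"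
    using Hh by (intro modular_sum_ge[OF \<open>finite I\<close>] borel_measurable_times_ennreal) simp_all
  also have "\<dots> \<le> \<rho> (\<lambda>y. ennreal (H (\<Sum>i\<in>I. w i * h i y)))"
  proof (rule modular_mono)
    have "I \<noteq> {}" using w(2) by auto
    show "(\<lambda>y. ennreal (H (\<Sum>i\<in>I. w i * h i y))) \<in> borel_measurable halfline"
      using h w by (intro borel_measurable_phi_bij_comp[OF H(1)] borel_measurable_sum sum_nonneg) auto
    fix y
    have "(\<Sum>i\<in>I. ennreal (w i) * ennreal (H (h i y))) = ennreal (\<Sum>i\<in>I. w i * H (h i y))"
      using w(1) h(2) phi_bij_nonneg[OF H(1)]
      by (simp add: sum_ennreal ennreal_mult[symmetric] del: ennreal_mult)
    also have "\<dots> \<le> ennreal (H (\<Sum>i\<in>I. w i * h i y))"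
      using concave_on_sum[OF \<open>finite I\<close> \<open>I \<noteq> {}\<close> H(2), of w "\<lambda>i. h i y"] w h by (auto intro: ennreal_leI)
    finally show "(\<Sum>i\<in>I. ennreal (w i) * ennreal (H (h i y))) \<le> ennreal (H (\<Sum>i\<in>I. w i * h i y))" .
  qed
  finally show ?thesis .
qed

lemma luxemburg_powr_sum_ge:
  fixes f :: "nat \<Rightarrow> real \<Rightarrow> real"
  assumes G: "phi_bij G" and q: "0 < q" and H: "phi_bij H" "concave_on {0..} H" and c\<^sub>0: "0 < c\<^sub>0"
    and equiv: "\<And>t. 0 \<le> t \<Longrightarrow> G ((t / c\<^sub>0) powr (1 / q)) \<le> H t \<and> H t \<le> G ((c\<^sub>0 * t) powr (1 / q))"
    and f: "\<And>i. i < n \<Longrightarrow> f i \<in> borel_measurable halfline"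
    and fin: "\<And>i. i < n \<Longrightarrow> luxemburg_modular \<rho> G (f i) < \<infinity>"
  shows "ennreal (1 / c\<^sub>0 powr (2 / q) * (\<Sum>i<n. enn2real (luxemburg_modular \<rho> G (f i)) powr q) powr (1 / q))
    \<le> luxemburg_modular \<rho> G (\<lambda>x. (\<Sum>i<n. \<bar>f i x\<bar> powr q) powr (1 / q))"
    (is "ennreal (_ * ?A powr _) \<le> luxemburg_modular \<rho> G ?g")
proof (rule le_luxemburg_modular_of_one_less[OF G borel_measurable_powr_sum[OF f]])
  fix c assume c: "0 < c" "c < 1 / c\<^sub>0 powr (2 / q) * ?A powr (1 / q)"
  define a where "a i = enn2real (luxemburg_modular \<rho> G (f i))" for i
  define I where "I = {i \<in> {..<n}. 0 < a i}"
  define w where "w i = a i powr q / ?A" for i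
  define \<beta> where "\<beta> i = (w i * c powr q * (c\<^sub>0 * c\<^sub>0)) powr (1 / q)" for i
  define k where "k i y = c\<^sub>0 * (\<bar>f i y\<bar> / \<beta> i) powr q" for i y
  have "0 < ?A powr (1 / q) / c\<^sub>0 powr (2 / q)" using c by simp
  then have "?A \<noteq> 0" by auto
  then have A: "0 < ?A" by (simp add: less_le sum_nonneg)
  have cq: "c powr q * (c\<^sub>0 * c\<^sub>0) < ?A"
  proof -
    have "c powr q < (1 / c\<^sub>0 powr (2 / q) * ?A powr (1 / q)) powr q"
      using c q by (intro powr_less_mono2) auto
    also have "\<dots> = ?A / (c\<^sub>0 * c\<^sub>0)"
      using A c\<^sub>0 q by (simp add: powr_divide powr_powr powr_numeral power2_eq_square)
    finally show ?thesis using c\<^sub>0 by (simp add: pos_less_divide_eq)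
  qed
  have "?A = (\<Sum>i\<in>I. a i powr q)"
    unfolding I_def a_def by (rule sum.mono_neutral_right) (auto simp: less_le)
  then have w: "\<And>i. i \<in> I \<Longrightarrow> 0 \<le> w i" "(\<Sum>i\<in>I. w i) = 1"
    using A by (simp_all add: w_def sum_divide_distrib[symmetric])
  have w_pos: "0 < w i" and \<beta>: "0 < \<beta> i" "ennreal (\<beta> i) < luxemburg_modular \<rho> G (f i)" if i: "i \<in> I" for i
  proof -
    show "0 < w i" using i A by (simp add: w_def I_def)
    then show "0 < \<beta> i" using c c\<^sub>0 by (simp add: \<beta>_def)
    have "w i * (c powr q * (c\<^sub>0 * c\<^sub>0)) < w i * ?A" using cq \<open>0 < w i\<close> by simp
    then have "\<beta> i < (a i powr q) powr (1 / q)"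
      unfolding \<beta>_def using \<open>0 < w i\<close> c c\<^sub>0 q A by (intro powr_less_mono2) (auto simp: w_def mult.assoc)
    then have "ennreal (\<beta> i) < ennreal (a i)"
      using q \<open>0 < \<beta> i\<close> i by (simp add: powr_powr ennreal_less_iff I_def)
    moreover have "ennreal (a i) = luxemburg_modular \<rho> G (f i)"
      using fin[of i] i by (simp add: a_def I_def less_top)
    ultimately show "ennreal (\<beta> i) < luxemburg_modular \<rho> G (f i)" by simp
  qed
  have "k i \<in> borel_measurable halfline" if "i \<in> I" for i
  proof -
    have [measurable]: "f i \<in> borel_measurable halfline" using f that by (simp add: I_def)
    show ?thesis unfolding k_def by measurable
  qed
  moreover have "0 \<le> k i y" for i y using c\<^sub>0 by (simp add: k_def)
  ultimately have k: "\<And>i. i \<in> I \<Longrightarrow> k i \<in> borel_measurable halfline" "\<And>i y. 0 \<le> k i y"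
    by blast+
  have "1 < (\<Sum>i\<in>I. ennreal (w i) * \<rho> (\<lambda>y. ennreal (H (k i y))))"
    unfolding k_def using equiv f \<beta>
    by (intro one_less_convex_comb_ennreal[OF _ w] one_less_modular_scaled[OF G H(1) q c\<^sub>0])
       (auto simp: I_def)
  also have "\<dots> \<le> \<rho> (\<lambda>y. ennreal (H (\<Sum>i\<in>I. w i * k i y)))"
    by (rule modular_concave_comb_ge[OF H _ w k]) (simp add: I_def)
  also have "(\<lambda>y. \<Sum>i\<in>I. w i * k i y) = (\<lambda>y. \<Sum>i\<in>I. \<bar>f i y\<bar> powr q / (c powr q * c\<^sub>0))"
  proof (intro ext sum.cong refl)
    fix y i assume "i \<in> I"
    then show "w i * k i y = \<bar>f i y\<bar> powr q / (c powr q * c\<^sub>0)"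
      using w_pos[of i] c c\<^sub>0 q by (simp add: k_def \<beta>_def powr_divide powr_powr powr_mult)
  qed
  also have "\<rho> (\<lambda>y. ennreal (H (\<Sum>i\<in>I. \<bar>f i y\<bar> powr q / (c powr q * c\<^sub>0)))) \<le> \<rho> (\<lambda>y. ennreal (G (\<bar>?g y\<bar> / c)))"
    using equiv f by (intro modular_partial_powr_sum_le[OF G H(1) q c\<^sub>0 c(1)]) (auto simp: I_def)
  finally show "1 < \<rho> (\<lambda>y. ennreal (G (\<bar>?g y\<bar> / c)))" .
qed

lemma q_concave_luxemburg_modular:
  assumes G: "phi_bij G" and q: "0 < q" and H: "phi_bij H" "concave_on {0..} H"
    and equiv: "phi_equiv (G \<circ> (\<lambda>t. t powr (1 / q))) H"
    and X: "\<And>f. f \<in> X \<Longrightarrow> f \<in> borel_measurable halfline \<and> N f < \<infinity>"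
    and N: "\<And>f. f \<in> borel_measurable halfline \<Longrightarrow> N f = luxemburg_modular \<rho> G f"
  shows "q_concave X N q"
proof -
  obtain c\<^sub>0 where c\<^sub>0: "0 < c\<^sub>0"
    and eq: "\<And>t. 0 \<le> t \<Longrightarrow> G ((t / c\<^sub>0) powr (1 / q)) \<le> H t \<and> H t \<le> G ((c\<^sub>0 * t) powr (1 / q))"
    using equiv unfolding phi_equiv_def by auto
  show ?thesis unfolding q_concave_def
  proof (intro exI[of _ "c\<^sub>0 powr (2 / q)"] conjI allI impI)
    show "0 < c\<^sub>0 powr (2 / q)" using c\<^sub>0 by simp
    fix n :: nat and f :: "nat \<Rightarrow> real \<Rightarrow> real"
    assume "\<forall>i<n. f i \<in> X"
    then have f: "\<And>i. i < n \<Longrightarrow> f i \<in> borel_measurable halfline" and fin: "\<And>i. i < n \<Longrightarrow> N (f i) < \<infinity>"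
      using X by auto
    then show "ennreal (1 / c\<^sub>0 powr (2 / q) * (\<Sum>i<n. enn2real (N (f i)) powr q) powr (1 / q))
        \<le> N (\<lambda>x. (\<Sum>i<n. \<bar>f i x\<bar> powr q) powr (1 / q))"
      using luxemburg_powr_sum_ge[OF G q H c\<^sub>0 eq f] N borel_measurable_powr_sum[OF f] by simp
  qed
qed

end

lemma homogeneous_modular_dist_modular:
  "phi_bij \<psi> \<Longrightarrow> homogeneous_modular (dist_modular (ext_phi \<psi>))"
  by unfold_locales
    (auto intro: dist_modular_mono dist_modular_cmult mono_ext_phi phi_bij_mono_on)

lemma subadditive_modular_dist_modular:
  assumes "phi_bij \<psi>" "concave_on {0..} \<psi>"
  shows "subadditive_modular (dist_modular (ext_phi \<psi>))"
  unfolding subadditive_modular_def subadditive_modular_axioms_def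
  using homogeneous_modular_dist_modular[OF assms(1)] by (blast intro: dist_modular_concave_sum_le[OF assms])

lemma superadditive_modular_dist_modular:
  assumes "phi_bij \<psi>" "convex_on {0..} \<psi>"
  shows "superadditive_modular (dist_modular (ext_phi \<psi>))"
  unfolding superadditive_modular_def superadditive_modular_axioms_def
  using homogeneous_modular_dist_modular[OF assms(1)] by (blast intro: dist_modular_convex_sum_ge[OF assms])

lemma phi_bij_phi_tilde_inv_comp:
  "phi_function F \<Longrightarrow> phi_function G \<Longrightarrow> phi_bij (phi_tilde G \<circ> phi_inv (phi_tilde F))"
  unfolding phi_inv_def by (simp add: phi_bij_comp phi_bij_inv phi_bij_phi_tilde phi_function_imp_phi_bij)

lemma OL_norm_eq_luxemburg_modular:
  assumes F: "phi_function F" and G: "phi_function G" and f: "f \<in> borel_measurable halfline"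
  shows "OL_norm F G f = luxemburg_modular (dist_modular (ext_phi (phi_tilde G \<circ> phi_inv (phi_tilde F)))) G f"
proof -
  have F': "phi_bij (phi_tilde F)" and G': "phi_bij (phi_tilde G)"
    using F G by (simp_all add: phi_bij_phi_tilde phi_function_imp_phi_bij)
  have "(\<integral>\<^sup>+x\<in>{0..}. ext_phi G (decr_rearr f ((phi_tilde F \<circ> phi_inv (phi_tilde G)) x) / ennreal c) \<partial>lebesgue)
      = dist_modular (ext_phi (phi_tilde G \<circ> phi_inv (phi_tilde F))) (\<lambda>y. ennreal (G (\<bar>f y\<bar> / c)))"
    if "0 < c" for c
  proof (rule nn_integral_ext_phi_decr_rearr[OF phi_function_imp_phi_bij[OF G] _ _ _ f that])
    show "phi_bij (phi_tilde F \<circ> phi_inv (phi_tilde G))" "phi_bij (phi_tilde G \<circ> phi_inv (phi_tilde F))"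
      using F G by (simp_all add: phi_bij_phi_tilde_inv_comp)
    show "(phi_tilde G \<circ> phi_inv (phi_tilde F)) ((phi_tilde F \<circ> phi_inv (phi_tilde G)) x) = x" if "0 \<le> x" for x
      unfolding phi_inv_def
      using that phi_bij_inv_into[OF G'] phi_bij_inv_into_f[OF F'] phi_bij_nonneg[OF F'] by simp
  qed
  then show ?thesis
    unfolding OL_norm_def luxemburg_def luxemburg_modular_def by (intro arg_cong[where f=Inf] image_cong Collect_cong) auto
qed

lemma OL_spaceD: "f \<in> OL_space F G \<Longrightarrow> f \<in> borel_measurable halfline \<and> OL_norm F G f < \<infinity>"
  by (simp add: OL_space_def halfline_def)

theorem theorem5p1:
  fixes F G :: "real \<Rightarrow> real" and p q :: real
  assumes "phi_function F" and "phi_function G" and "0 < p" and "0 < q"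
  shows "((\<exists>H. phi_function H \<and> convex_on {0..} H \<and> phi_equiv (G \<circ> (\<lambda>t. t powr (1 / p))) H)
            \<and> concave_on {0..} (phi_tilde G \<circ> phi_inv (phi_tilde F))
           \<longrightarrow> p_convex (OL_space F G) (OL_norm F G) p)
       \<and> ((\<exists>H. phi_function H \<and> concave_on {0..} H \<and> phi_equiv (G \<circ> (\<lambda>t. t powr (1 / q))) H)
            \<and> convex_on {0..} (phi_tilde G \<circ> phi_inv (phi_tilde F))
           \<longrightarrow> q_concave (OL_space F G) (OL_norm F G) q)"
proof -
  let ?\<psi> = "phi_tilde G \<circ> phi_inv (phi_tilde F)"
  have G: "phi_bij G" by (rule phi_function_imp_phi_bij[OF assms(2)])
  have \<psi>: "phi_bij ?\<psi>" by (rule phi_bij_phi_tilde_inv_comp[OF assms(1,2)])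
  note N = OL_norm_eq_luxemburg_modular[OF assms(1,2)]
  show ?thesis
  proof (intro conjI impI; elim conjE exE)
    fix H assume H: "phi_function H" "convex_on {0..} H" "phi_equiv (G \<circ> (\<lambda>t. t powr (1 / p))) H"
      and "concave_on {0..} ?\<psi>"
    then interpret subadditive_modular "dist_modular (ext_phi ?\<psi>)"
      by (intro subadditive_modular_dist_modular[OF \<psi>])
    show "p_convex (OL_space F G) (OL_norm F G) p"
      by (rule p_convex_luxemburg_modular[OF G assms(3) phi_function_imp_phi_bij[OF H(1)] H(2,3) OL_spaceD N])
  next
    fix H assume H: "phi_function H" "concave_on {0..} H" "phi_equiv (G \<circ> (\<lambda>t. t powr (1 / q))) H"
      and "convex_on {0..} ?\<psi>"
    then interpret superadditive_modular "dist_modular (ext_phi ?\<psi>)"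
      by (intro superadditive_modular_dist_modular[OF \<psi>])
    show "q_concave (OL_space F G) (OL_norm F G) q"
      by (rule q_concave_luxemburg_modular[OF G assms(4) phi_function_imp_phi_bij[OF H(1)] H(2,3) OL_spaceD N])
  qed
qed

end
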